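(* Fix an integer $n\ge 0$ and $\mathbb K\in\{\mathbb R,\mathbb C\}$. Let $\mathcal B^0\supset\mathcal B^1\supset\cdots\supset\mathcal B^{n+1}$ be linear subspaces, and let $\mathcal L=\mathcal L_0,\dots,\mathcal L_n$ and $\mathcal L(\epsilon,\cdot):\mathcal B^0\to\mathcal B^0$ ($\epsilon\in(0,1)$) be linear operators satisfying conditions (I), (II), (III) of the context. Assume also: (a) each $\mathcal B^k$ is a Banach space (with norm $\|\cdot\|_{\mathcal B^k}$); (b) $\nu$ is a bounded linear functional on $\mathcal B^0$, $\mathcal L_j$ is a bounded operator $\mathcal B^i\to\mathcal B^{i-j}$ for $j=0,\dots,n$ and $i=j,\dots,n+1$, $\sup_{\epsilon}\|\kappa(\epsilon,\cdot)\|_{\mathcal B^0\to\mathbb K}<+\infty$, and $\mathcal R_\lambda$ is bounded as an operator $\mathcal B^1\to\mathcal B^0$ and as an operator $\mathcal B^j\to\mathcal B^j$ for $j=1,\dots,n+1$; (c) $\lim_{\epsilon\to0}\|\tilde{\mathcal L}_j(\epsilon,\cdot)\|_{\mathcal B^{j+1}\to\mathcal B^0}=0$ for each $j=0,\dots,n$. Put $\|f\|_k:=\max_{1\le i\le k}\|f\|_{\mathcal B^i}$ and $\mathcal B^k_1:=(\mathcal B^k,\|\cdot\|_k)$. Then each $\kappa_k$ is a bounded linear functional on $\mathcal B^k_1$ and $\|\tilde\kappa_k(\epsilon,\cdot)\|_{\mathcal B_1^{k+1}\to\mathbb K}\to0$ as $\epsilon\to0$ for each $0\le k\le n$. Moreover,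 if there is $1_{\mathcal B}\in\mathcal B^{n+1}$ with $\nu(1_{\mathcal B})=\nu(\epsilon,1_{\mathcal B})=1$ for all $\epsilon$ and $\sup_\epsilon|\nu(\epsilon,h)|<+\infty$, then each $\nu_k$ is a bounded linear functional on $\mathcal B^k_1$ and $\|\tilde\nu_k(\epsilon,\cdot)\|_{\mathcal B_1^{k+1}\to\mathbb K}\to0$.
   Context: Conditions. (I) For each $j=0,\dots,n$ and $i=j,\dots,n$, $\mathcal L_j$ maps $\mathcal B^i$ linearly into $\mathcal B^{i-j}$. (II) $\mathcal L:\mathcal B^0\to\mathcal B^0$ decomposes as $\mathcal L=\lambda(h\otimes\nu)+\mathcal R$ with $(\lambda,h,\nu)\in\mathbb K\times\mathcal B^{n+1}\times(\mathcal B^0)^*$ ($(\mathcal B^0)^*$ = linear functionals), $\lambda\neq0$, $\nu\circ\mathcal L=\lambda\nu$, $\mathcal Lh=\lambda h$, $\nu(h)=1$, where $(h\otimes\nu)f=\nu(f)h$; and there is a linear subspace $\mathcal D^0$ with $\mathcal B^1\subset\mathcal D^0\subset\mathcal B^0$ such that every $f\in\mathcal D^0$ has exactly one $g\in\mathcal B^0$ with $(\mathcal R-\lambda\mathcal I)g=f$; this inverse $\mathcal R_\lambda:\mathcal D^0\to\mathcal B^0$ satisfies $\mathcal R_\lambda\mathcal B^i\subset\mathcal B^i$ for $1\le i\le n+1$. (III) For each $\epsilon$ there are $\lambda(\epsilon)\in\mathbb K$, $\nu(\epsilon,\cdot)\in(\mathcal B^0)^*$ with $\nu(\epsilon,\mathcal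 L(\epsilon,f))=\lambda(\epsilon)\nu(\epsilon,f)$ for all $f$ and $\nu(\epsilon,h)\ne0$. Notation. $\tilde{\mathcal L}_j(\epsilon,\cdot):=(\mathcal L(\epsilon,\cdot)-\mathcal L-\sum_{i=1}^j\mathcal L_i\epsilon^i)/\epsilon^j$; $\kappa(\epsilon,f):=\nu(\epsilon,f)/\nu(\epsilon,h)$. Coefficients: $\kappa_0=\nu$, and recursively for $k\ge1$, $\lambda_k=\sum_{j=1}^k\kappa_{k-j}(\mathcal L_jh)$, $\kappa_k(f)=\sum_{j=1}^k\kappa_{k-j}((\lambda_j\mathcal I-\mathcal L_j)\mathcal R_\lambda f)$. Remainders, for $0\le k\le n$: $\tilde\lambda_k(\epsilon):=(\lambda(\epsilon)-\lambda-\sum_{i=1}^k\lambda_i\epsilon^i)/\epsilon^k$ and $\tilde\kappa_k(\epsilon,f):=(\kappa(\epsilon,f)-\nu(f)-\sum_{i=1}^k\kappa_i(f)\epsilon^i)/\epsilon^k$ for $f\in\mathcal B^{k+1}$. Given $1_{\mathcal B}$, set $\nu_0=\nu$ and $\nu_k=\kappa_k+\sum_{i=1}^k\Big(\sum_{l=1}^i\sum_{\substack{j_1,\dots,j_l\ge1\\ j_1+\cdots+j_l=i}}(-1)^l\kappa_{j_1}(1_{\mathcal B})\cdots\kappa_{j_l}(1_{\mathcal B})\Big)\kappa_{k-i}$, and $\tilde\nu_k(\epsilon,f):=(\nu(\epsilon,f)-\sum_{i=0}^k\nu_i(f)\epsilon^i)/\epsilon^k$. $\|\cdot\|_{X\to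 Y}$ denotes operator norm. *)

theory Defs
  imports Complex_Main
begin

text \<open>A vector space over the scalar field 'k is given by the carrier type 'v
 (an abelian group) together with a scalar multiplication sc satisfying
 vector_space sc.  Subspaces carry their own norms N :: 'v => real.\<close>

definition lin_on :: "('k \<Rightarrow> 'v \<Rightarrow> 'v) \<Rightarrow> ('k \<Rightarrow> 'w \<Rightarrow> 'w) \<Rightarrow> 'v set
    \<Rightarrow> ('v::ab_group_add \<Rightarrow> 'w::ab_group_add) \<Rightarrow> bool" where
  "lin_on sc1 sc2 S f \<longleftrightarrow> (\<forall>x\<in>S. \<forall>y\<in>S. f (x + y) = f x + f y) \<and>
      (\<forall>c. \<forall>x\<in>S. f (sc1 c x) = sc2 c (f x))"

definition banach_on :: "('k::real_normed_field \<Rightarrow> 'v::ab_group_add \<Rightarrow> 'v) \<Rightarrow> 'v set \<Rightarrow> ('v \<Rightarrow> real) \<Rightarrow> bool" where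
  "banach_on sc S N \<longleftrightarrow> module.subspace sc S \<and>
     (\<forall>x\<in>S. 0 \<le> N x) \<and> (\<forall>x\<in>S. N x = 0 \<longrightarrow> x = 0) \<and>
     (\<forall>c. \<forall>x\<in>S. N (sc c x) = norm c * N x) \<and>
     (\<forall>x\<in>S. \<forall>y\<in>S. N (x + y) \<le> N x + N y) \<and>
     (\<forall>X::nat \<Rightarrow> 'v. (\<forall>m. X m \<in> S) \<and> (\<forall>e>0. \<exists>M. \<forall>p\<ge>M. \<forall>q\<ge>M. N (X p - X q) < e)
          \<longrightarrow> (\<exists>x\<in>S. \<forall>e>0. \<exists>M. \<forall>p\<ge>M. N (X p - x) < e))"

definition bounded_op :: "('k \<Rightarrow> 'v \<Rightarrow> 'v) \<Rightarrow> ('k \<Rightarrow> 'w \<Rightarrow> 'w) \<Rightarrow> 'v set \<Rightarrow> ('v \<Rightarrow> real)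
    \<Rightarrow> 'w set \<Rightarrow> ('w \<Rightarrow> real) \<Rightarrow> ('v::ab_group_add \<Rightarrow> 'w::ab_group_add) \<Rightarrow> bool" where
  "bounded_op sc1 sc2 S1 N1 S2 N2 f \<longleftrightarrow> lin_on sc1 sc2 S1 f \<and> f ` S1 \<subseteq> S2 \<and>
     (\<exists>C. \<forall>x\<in>S1. N2 (f x) \<le> C * N1 x)"

definition bounded_functional :: "('k::real_normed_field \<Rightarrow> 'v::ab_group_add \<Rightarrow> 'v) \<Rightarrow> 'v set \<Rightarrow> ('v \<Rightarrow> real)
    \<Rightarrow> ('v \<Rightarrow> 'k) \<Rightarrow> bool" where
  "bounded_functional sc S N f \<longleftrightarrow> bounded_op sc (*) S N UNIV norm f"

definition opnorm_le :: "'v set \<Rightarrow> ('v \<Rightarrow> real) \<Rightarrow> ('w \<Rightarrow> real) \<Rightarrow> ('v \<Rightarrow> 'w) \<Rightarrow> real \<Rightarrow> bool" where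
  "opnorm_le S N1 N2 f c \<longleftrightarrow> (\<forall>x\<in>S. N2 (f x) \<le> c * N1 x)"

definition opnorm_tendsto_0 :: "'v set \<Rightarrow> ('v \<Rightarrow> real) \<Rightarrow> ('w \<Rightarrow> real) \<Rightarrow> (real \<Rightarrow> 'v \<Rightarrow> 'w) \<Rightarrow> bool" where
  "opnorm_tendsto_0 S N1 N2 F \<longleftrightarrow> (\<forall>e>0. eventually (\<lambda>eps. opnorm_le S N1 N2 (F eps) e) (at_right 0))"

definition normk :: "(nat \<Rightarrow> 'v \<Rightarrow> real) \<Rightarrow> nat \<Rightarrow> 'v \<Rightarrow> real" where
  "normk N k f = (if k = 0 then N 0 f else Max ((\<lambda>i. N i f) ` {1..k}))"

text \<open>The remainder operator R = L - lambda (h tensor nu) and its resolvent R_lambda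
  (the unique g with (R - lambda I) g = f).\<close>
definition Rop :: "('k \<Rightarrow> 'v \<Rightarrow> 'v) \<Rightarrow> ('v \<Rightarrow> 'v) \<Rightarrow> 'k \<Rightarrow> 'v \<Rightarrow> ('v \<Rightarrow> 'k) \<Rightarrow> 'v \<Rightarrow> 'v::ab_group_add" where
  "Rop sc L0 lam h nu g = L0 g - sc lam (sc (nu g) h)"

definition Rlam :: "('k \<Rightarrow> 'v \<Rightarrow> 'v) \<Rightarrow> ('v \<Rightarrow> 'v) \<Rightarrow> 'k \<Rightarrow> 'v \<Rightarrow> ('v \<Rightarrow> 'k) \<Rightarrow> 'v \<Rightarrow> 'v::ab_group_add" where
  "Rlam sc L0 lam h nu f = (THE g. Rop sc L0 lam h nu g - sc lam g = f)"

text \<open>The coefficients kappa_k (with Rl = R_lambda), lambda_k inlined: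
  kappa_0 = nu, kappa_k f = sum_{j=1..k} kappa_{k-j}((lambda_j I - L_j) R_lambda f),
  lambda_j = sum_{i=1..j} kappa_{j-i}(L_i h).\<close>
function kap :: "('k::field \<Rightarrow> 'v \<Rightarrow> 'v) \<Rightarrow> (nat \<Rightarrow> 'v \<Rightarrow> 'v::ab_group_add) \<Rightarrow> 'v \<Rightarrow> ('v \<Rightarrow> 'k)
    \<Rightarrow> ('v \<Rightarrow> 'v) \<Rightarrow> nat \<Rightarrow> 'v \<Rightarrow> 'k" where
  "kap sc L h nu Rl k f = (if k = 0 then nu f else
     (\<Sum>j=1..k. kap sc L h nu Rl (k - j)
        (sc (\<Sum>i=1..j. kap sc L h nu Rl (j - i) (L i h)) (Rl f) - L j (Rl f))))"
  by pat_completeness auto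
termination
  by (relation "measure (\<lambda>(sc, L, h, nu, Rl, k, f). k)") auto

definition lamk :: "('k::field \<Rightarrow> 'v \<Rightarrow> 'v) \<Rightarrow> (nat \<Rightarrow> 'v \<Rightarrow> 'v::ab_group_add) \<Rightarrow> 'v \<Rightarrow> ('v \<Rightarrow> 'k)
    \<Rightarrow> ('v \<Rightarrow> 'v) \<Rightarrow> nat \<Rightarrow> 'k" where
  "lamk sc L h nu Rl j = (\<Sum>i=1..j. kap sc L h nu Rl (j - i) (L i h))"

definition compositions :: "nat \<Rightarrow> nat \<Rightarrow> nat list set" where
  "compositions i l = {js. length js = l \<and> (\<forall>j\<in>set js. 1 \<le> j) \<and> sum_list js = i}"

definition nuk :: "('k::field \<Rightarrow> 'v \<Rightarrow> 'v) \<Rightarrow> (nat \<Rightarrow> 'v \<Rightarrow> 'v::ab_group_add) \<Rightarrow> 'v \<Rightarrow> ('v \<Rightarrow> 'k)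
    \<Rightarrow> ('v \<Rightarrow> 'v) \<Rightarrow> 'v \<Rightarrow> nat \<Rightarrow> 'v \<Rightarrow> 'k" where
  "nuk sc L h nu Rl one k f = kap sc L h nu Rl k f +
     (\<Sum>i=1..k. (\<Sum>l=1..i. \<Sum>js\<in>compositions i l.
        (-1) ^ l * prod_list (map (\<lambda>j. kap sc L h nu Rl j one) js)) * kap sc L h nu Rl (k - i) f)"


definition kappa_eps :: "(real \<Rightarrow> 'v \<Rightarrow> 'k::field) \<Rightarrow> 'v \<Rightarrow> real \<Rightarrow> 'v \<Rightarrow> 'k" where
  "kappa_eps nueps h eps f = nueps eps f / nueps eps h"

definition tildeL :: "('k::real_normed_field \<Rightarrow> 'v \<Rightarrow> 'v) \<Rightarrow> (nat \<Rightarrow> 'v \<Rightarrow> 'v::ab_group_add)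
    \<Rightarrow> (real \<Rightarrow> 'v \<Rightarrow> 'v) \<Rightarrow> nat \<Rightarrow> real \<Rightarrow> 'v \<Rightarrow> 'v" where
  "tildeL sc L Leps j eps f = sc (inverse (of_real eps ^ j))
      (Leps eps f - L 0 f - (\<Sum>i=1..j. sc (of_real eps ^ i) (L i f)))"

definition tildekappa :: "('k::real_normed_field \<Rightarrow> 'v \<Rightarrow> 'v) \<Rightarrow> (nat \<Rightarrow> 'v \<Rightarrow> 'v::ab_group_add)
    \<Rightarrow> 'v \<Rightarrow> ('v \<Rightarrow> 'k) \<Rightarrow> ('v \<Rightarrow> 'v) \<Rightarrow> (real \<Rightarrow> 'v \<Rightarrow> 'k) \<Rightarrow> nat \<Rightarrow> real \<Rightarrow> 'v \<Rightarrow> 'k" where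
  "tildekappa sc L h nu Rl nueps k eps f =
     (kappa_eps nueps h eps f - nu f - (\<Sum>i=1..k. kap sc L h nu Rl i f * of_real eps ^ i))
       / of_real eps ^ k"

definition tildenu :: "('k::real_normed_field \<Rightarrow> 'v \<Rightarrow> 'v) \<Rightarrow> (nat \<Rightarrow> 'v \<Rightarrow> 'v::ab_group_add)
    \<Rightarrow> 'v \<Rightarrow> ('v \<Rightarrow> 'k) \<Rightarrow> ('v \<Rightarrow> 'v) \<Rightarrow> 'v \<Rightarrow> (real \<Rightarrow> 'v \<Rightarrow> 'k) \<Rightarrow> nat \<Rightarrow> real \<Rightarrow> 'v \<Rightarrow> 'k" where
  "tildenu sc L h nu Rl one nueps k eps f =
     (nueps eps f - (\<Sum>i=0..k. nuk sc L h nu Rl one i f * of_real eps ^ i)) / of_real eps ^ k"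

end

theory Submission
  imports Defs
begin

(* Write x = (L - \<lambda> h\<otimes>\<nu> - \<lambda>) g with g = R\<^sub>\<lambda> x.  Since \<nu> L = \<lambda> \<nu>, \<nu>(\<epsilon>, L(\<epsilon>, .)) = \<lambda>(\<epsilon>) \<nu>(\<epsilon>, .) and
   \<kappa>(\<epsilon>, h) = 1, this gives the exact identity

     \<kappa>(\<epsilon>, x) - \<nu>(x) = (\<lambda>(\<epsilon>) - \<lambda>) \<kappa>(\<epsilon>, g) - (\<kappa>(\<epsilon>, L(\<epsilon>, g)) - \<kappa>(\<epsilon>, L g)).

   Expand L(\<epsilon>, .) - L = \<Sum>1\<le>j\<le>m. \<epsilon>^j L_j + \<epsilon>^m L~_m(\<epsilon>, .) and each \<kappa>(\<epsilon>, .) on the right to the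
   matching lower order.  The coefficient of \<epsilon>^k is then exactly the recursion defining \<kappa>_k, and the
   remainder \<kappa>~_m(\<epsilon>, x) is a combination of the lower remainders \<kappa>~_(m-j) at R\<^sub>\<lambda> x and L_j R\<^sub>\<lambda> x,
   of \<lambda>~_m(\<epsilon>) and of \<kappa>(\<epsilon>, L~_m(\<epsilon>, R\<^sub>\<lambda> x)).  As R\<^sub>\<lambda> and L_j are bounded between the spaces B^i,
   induction on m gives \<kappa>~_m \<rightarrow> 0 in operator norm.  For \<nu>(\<epsilon>, .) use \<nu>(\<epsilon>, h) = 1 / \<kappa>(\<epsilon>, 1_B):
   \<nu>(\<epsilon>, h) expands with the coefficients of the reciprocal of \<Sum>j. \<kappa>_j(1_B) \<epsilon>^j, and
   \<nu>(\<epsilon>, f) = \<nu>(\<epsilon>, h) \<kappa>(\<epsilon>, f) is a Cauchy product. *)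

section \<open>Seminorm bounds\<close>

definition bounded_map :: "'v set \<Rightarrow> ('v \<Rightarrow> real) \<Rightarrow> 'w set \<Rightarrow> ('w \<Rightarrow> real) \<Rightarrow> ('v \<Rightarrow> 'w) \<Rightarrow> bool" where
  "bounded_map S M S' M' T \<longleftrightarrow> T ` S \<subseteq> S' \<and> (\<exists>C\<ge>0. opnorm_le S M M' T C)"

lemma opnorm_le_mono:
  "opnorm_le S M M' T C \<Longrightarrow> C \<le> D \<Longrightarrow> \<forall>x\<in>S. 0 \<le> M x \<Longrightarrow> opnorm_le S M M' T D"
  unfolding opnorm_le_def by (meson mult_right_mono order_trans)

lemma opnorm_le_comp:
  assumes "opnorm_le S' M' M'' U D" "opnorm_le S M M' T C" "T ` S \<subseteq> S'" "0 \<le> D"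
  shows "opnorm_le S M M'' (\<lambda>x. U (T x)) (D * C)"
  unfolding opnorm_le_def
proof
  fix x assume x: "x \<in> S"
  then have "M'' (U (T x)) \<le> D * M' (T x)" using assms(1,3) unfolding opnorm_le_def by blast
  also have "\<dots> \<le> D * (C * M x)" using assms(2,4) x unfolding opnorm_le_def by (simp add: mult_left_mono)
  finally show "M'' (U (T x)) \<le> D * C * M x" by (simp add: mult.assoc)
qed

lemma opnorm_le_add:
  fixes F G :: "'v \<Rightarrow> 'k::real_normed_vector"
  assumes "opnorm_le S M norm F C" "opnorm_le S M norm G D"
  shows "opnorm_le S M norm (\<lambda>x. F x + G x) (C + D)"
  unfolding opnorm_le_def
proof
  fix x assume "x \<in> S"
  then have "norm (F x) + norm (G x) \<le> C * M x + D * M x"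
    using assms unfolding opnorm_le_def by (simp add: add_mono)
  then show "norm (F x + G x) \<le> (C + D) * M x"
    by (simp add: distrib_right order_trans[OF norm_triangle_ineq])
qed

lemma opnorm_le_diff:
  fixes F G :: "'v \<Rightarrow> 'k::real_normed_vector"
  assumes "opnorm_le S M norm F C" "opnorm_le S M norm G D"
  shows "opnorm_le S M norm (\<lambda>x. F x - G x) (C + D)"
  using opnorm_le_add[OF assms(1), of "\<lambda>x. - G x"] assms(2) by (simp add: opnorm_le_def)

lemma opnorm_le_cmult:
  fixes F :: "'v \<Rightarrow> 'k::real_normed_algebra"
  assumes "opnorm_le S M norm F C"
  shows "opnorm_le S M norm (\<lambda>x. c * F x) (norm c * C)"
  unfolding opnorm_le_def
proof
  fix x assume "x \<in> S"
  then have "norm c * norm (F x) \<le> norm c * (C * M x)"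
    using assms unfolding opnorm_le_def by (simp add: mult_left_mono)
  then show "norm (c * F x) \<le> norm c * C * M x"
    by (simp add: mult.assoc order_trans[OF norm_mult_ineq])
qed

lemma bounded_map_comp:
  assumes "bounded_map S M S' M' T" "bounded_map S' M' S'' M'' U"
  shows "bounded_map S M S'' M'' (\<lambda>x. U (T x))"
proof -
  obtain C D where "C \<ge> 0" "D \<ge> 0" "T ` S \<subseteq> S'" "U ` S' \<subseteq> S''"
    "opnorm_le S M M' T C" "opnorm_le S' M' M'' U D"
    using assms unfolding bounded_map_def by blast
  then show ?thesis
    unfolding bounded_map_def by (intro conjI exI[of _ "D * C"]) (auto intro: opnorm_le_comp)
qed

lemma bounded_map_add:
  fixes F G :: "'v \<Rightarrow> 'k::real_normed_vector"
  shows "bounded_map S M UNIV norm F \<Longrightarrow> bounded_map S M UNIV norm G \<Longrightarrow>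
    bounded_map S M UNIV norm (\<lambda>x. F x + G x)"
  unfolding bounded_map_def by (blast intro: add_nonneg_nonneg opnorm_le_add)

lemma bounded_map_diff:
  fixes F G :: "'v \<Rightarrow> 'k::real_normed_vector"
  shows "bounded_map S M UNIV norm F \<Longrightarrow> bounded_map S M UNIV norm G \<Longrightarrow>
    bounded_map S M UNIV norm (\<lambda>x. F x - G x)"
  unfolding bounded_map_def by (blast intro: add_nonneg_nonneg opnorm_le_diff)

lemma bounded_map_cmult:
  fixes F :: "'v \<Rightarrow> 'k::real_normed_algebra"
  shows "bounded_map S M UNIV norm F \<Longrightarrow> bounded_map S M UNIV norm (\<lambda>x. c * F x)"
  unfolding bounded_map_def by (blast intro: mult_nonneg_nonneg norm_ge_zero opnorm_le_cmult)

lemma bounded_map_sum: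
  fixes F :: "'i \<Rightarrow> 'v \<Rightarrow> 'k::real_normed_vector"
  assumes "\<And>i. i \<in> I \<Longrightarrow> bounded_map S M UNIV norm (F i)"
  shows "bounded_map S M UNIV norm (\<lambda>x. \<Sum>i\<in>I. F i x)"
  using assms
proof (induction I rule: infinite_finite_induct)
  case (insert i I)
  then show ?case by (simp add: bounded_map_add)
qed (auto simp: bounded_map_def opnorm_le_def intro!: exI[of _ 0])

lemma bounded_map_cong:
  "bounded_map S M S' M' T \<Longrightarrow> (\<And>x. x \<in> S \<Longrightarrow> U x = T x) \<Longrightarrow> bounded_map S M S' M' U"
  unfolding bounded_map_def opnorm_le_def by auto

lemma bounded_map_opnorm_le: "bounded_map S M S' M' T \<Longrightarrow> \<exists>C. opnorm_le S M M' T C"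
  unfolding bounded_map_def by blast

lemma bounded_op_imp_bounded_map:
  assumes "bounded_op sc1 sc2 S M S' M' f" "\<forall>x\<in>S. 0 \<le> M x"
  shows "bounded_map S M S' M' f"
proof -
  obtain C where f: "f ` S \<subseteq> S'" and C: "opnorm_le S M M' f C"
    using assms(1) unfolding bounded_op_def opnorm_le_def by blast
  have "opnorm_le S M M' f \<bar>C\<bar>"
    using C abs_ge_self assms(2) by (rule opnorm_le_mono)
  with f show ?thesis
    unfolding bounded_map_def by (intro conjI exI[of _ "\<bar>C\<bar>"]) auto
qed

lemma bounded_functionalI:
  "lin_on sc (*) S f \<Longrightarrow> bounded_map S N UNIV norm f \<Longrightarrow> bounded_functional sc S N f"
  unfolding bounded_functional_def bounded_op_def bounded_map_def opnorm_le_def by blast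

lemma N_le_normk: "1 \<le> i \<Longrightarrow> i \<le> k \<Longrightarrow> N i x \<le> normk N k x"
  unfolding normk_def by (auto intro!: Max_ge)

lemma normk_mono: "1 \<le> i \<Longrightarrow> i \<le> k \<Longrightarrow> normk N i x \<le> normk N k x"
  using N_le_normk[of _ k N x] by (simp add: normk_def Max_le_iff)

lemma normk_0 [simp]: "normk N 0 = N 0"
  unfolding normk_def by auto

lemma bounded_map_normk:
  assumes T: "T ` S \<subseteq> S'" and M: "\<forall>x\<in>S. 0 \<le> M x"
    and comp: "\<And>i. 1 \<le> i \<Longrightarrow> i \<le> k \<Longrightarrow> \<exists>C. opnorm_le S M (N i) T C"
    and comp0: "k = 0 \<Longrightarrow> \<exists>C. opnorm_le S M (N 0) T C"
  shows "bounded_map S M S' (normk N k) T"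
proof (cases "k = 0")
  case True
  then obtain C where "opnorm_le S M (N 0) T C" using comp0 by blast
  then have "opnorm_le S M (N 0) T \<bar>C\<bar>"
    using abs_ge_self M by (rule opnorm_le_mono)
  with True T show ?thesis
    unfolding bounded_map_def by (intro conjI exI[of _ "\<bar>C\<bar>"]) auto
next
  case False
  define C where "C i = (SOME C. opnorm_le S M (N i) T C)" for i
  have C: "opnorm_le S M (N i) T (C i)" if "1 \<le> i" "i \<le> k" for i
    unfolding C_def using comp[OF that] by (rule someI_ex)
  define D where "D = (\<Sum>i=1..k. \<bar>C i\<bar>)"
  have "normk N k (T x) \<le> D * M x" if x: "x \<in> S" for x
  proof -
    have "N i (T x) \<le> D * M x" if "1 \<le> i" "i \<le> k" for i
    proof -
      have "N i (T x) \<le> C i * M x" using C[OF that] x unfolding opnorm_le_def by blast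
      also have "\<bar>C i\<bar> \<le> D"
        using that unfolding D_def by (intro member_le_sum) auto
      then have "C i \<le> D" by linarith
      then have "C i * M x \<le> D * M x"
        using M x by (simp add: mult_right_mono)
      finally show ?thesis .
    qed
    with False show ?thesis unfolding normk_def by (simp add: Max_le_iff)
  qed
  moreover have "0 \<le> D" unfolding D_def by (simp add: sum_nonneg)
  ultimately show ?thesis
    using T unfolding bounded_map_def opnorm_le_def by blast
qed

lemma lin_on_comp:
  "lin_on sc1 sc2 S T \<Longrightarrow> T ` S \<subseteq> S' \<Longrightarrow> lin_on sc2 sc3 S' f \<Longrightarrow> lin_on sc1 sc3 S (\<lambda>x. f (T x))"
  unfolding lin_on_def by (auto simp: image_subset_iff)

lemma lin_on_diff:
  "lin_on sc (*) S f \<Longrightarrow> lin_on sc (*) S g \<Longrightarrow> lin_on sc (*) S (\<lambda>x. f x - (g x :: 'k::field))"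
  unfolding lin_on_def by (auto simp: algebra_simps)

lemma lin_on_cmult: "lin_on sc (*) S f \<Longrightarrow> lin_on sc (*) S (\<lambda>x. a * (f x :: 'k::field))"
  unfolding lin_on_def by (auto simp: algebra_simps)

lemma lin_on_sum:
  "(\<And>i. i \<in> I \<Longrightarrow> lin_on sc (*) S (f i)) \<Longrightarrow> lin_on sc (*) S (\<lambda>x. \<Sum>i\<in>I. (f i x :: 'k::field))"
  unfolding lin_on_def by (auto simp: sum.distrib sum_distrib_left)

lemma lin_on_subset: "lin_on sc1 sc2 S f \<Longrightarrow> S' \<subseteq> S \<Longrightarrow> lin_on sc1 sc2 S' f"
  unfolding lin_on_def by blast

lemma lin_on_cong:
  assumes "lin_on sc1 sc2 S f" "\<And>x. x \<in> S \<Longrightarrow> g x = f x"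
    and "\<forall>x\<in>S. \<forall>y\<in>S. x + y \<in> S" "\<forall>c. \<forall>x\<in>S. sc1 c x \<in> S"
  shows "lin_on sc1 sc2 S g"
  using assms unfolding lin_on_def by simp

lemma lin_on_UNIV_additive: "lin_on sc1 sc2 UNIV f \<Longrightarrow> additive f"
  unfolding lin_on_def by unfold_locales simp

lemma lin_on_subspace_diff:
  assumes "module sc" "lin_on sc sc2 S f" "module.subspace sc S" "x \<in> S" "y \<in> S"
  shows "f (x - y) = f x - f y"
proof -
  have "x - y \<in> S" using module.subspace_diff[OF assms(1,3,4,5)] .
  with assms(2,5) have "f (x - y + y) = f (x - y) + f y" unfolding lin_on_def by blast
  then show ?thesis by (simp add: algebra_simps)
qed

section \<open>Operator-norm limits at \<open>0\<^sup>+\<close>\<close>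

lemma eventually_at_right_0_1: "\<forall>\<^sub>F eps in at_right (0::real). 0 < eps \<and> eps < 1"
  unfolding eventually_at_right[OF zero_less_one] by (intro exI[of _ 1]) auto

definition bounded_near_0 :: "'v set \<Rightarrow> ('v \<Rightarrow> real) \<Rightarrow> (real \<Rightarrow> 'v \<Rightarrow> 'k::real_normed_vector) \<Rightarrow> bool" where
  "bounded_near_0 S M F \<longleftrightarrow> (\<exists>C\<ge>0. \<forall>\<^sub>F eps in at_right 0. opnorm_le S M norm (F eps) C)"

lemma opnorm_tendsto_0I:
  assumes M: "\<forall>x\<in>S. 0 \<le> M x"
    and C: "\<And>e. e > 0 \<Longrightarrow> \<forall>\<^sub>F eps in at_right 0. opnorm_le S M M' (F eps) (C * e)"
  shows "opnorm_tendsto_0 S M M' F"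
  unfolding opnorm_tendsto_0_def
proof (intro allI impI)
  fix e :: real assume e: "e > 0"
  have "C * (e / (\<bar>C\<bar> + 1)) \<le> \<bar>C\<bar> * (e / (\<bar>C\<bar> + 1))"
    using e by (intro mult_right_mono) auto
  also have "\<dots> \<le> e"
    using e by (simp add: field_simps)
  finally have "C * (e / (\<bar>C\<bar> + 1)) \<le> e" .
  moreover have "\<forall>\<^sub>F eps in at_right 0. opnorm_le S M M' (F eps) (C * (e / (\<bar>C\<bar> + 1)))"
    using e by (intro C) (simp add: add_pos_nonneg)
  ultimately show "\<forall>\<^sub>F eps in at_right 0. opnorm_le S M M' (F eps) e"
    by (auto elim: eventually_mono intro: opnorm_le_mono[OF _ _ M])
qed

lemma opnorm_tendsto_0_add:
  fixes F G :: "real \<Rightarrow> 'v \<Rightarrow> 'k::real_normed_vector"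
  assumes "\<forall>x\<in>S. 0 \<le> M x" "opnorm_tendsto_0 S M norm F" "opnorm_tendsto_0 S M norm G"
  shows "opnorm_tendsto_0 S M norm (\<lambda>eps x. F eps x + G eps x)"
proof (rule opnorm_tendsto_0I[OF assms(1), where C = 2])
  fix e :: real assume "e > 0"
  then have "\<forall>\<^sub>F eps in at_right 0. opnorm_le S M norm (F eps) e \<and> opnorm_le S M norm (G eps) e"
    using assms(2,3) unfolding opnorm_tendsto_0_def by (simp add: eventually_conj_iff)
  then show "\<forall>\<^sub>F eps in at_right 0. opnorm_le S M norm (\<lambda>x. F eps x + G eps x) (2 * e)"
    by (rule eventually_mono) (metis mult_2 opnorm_le_add)
qed

lemma opnorm_tendsto_0_diff:
  fixes F G :: "real \<Rightarrow> 'v \<Rightarrow> 'k::real_normed_vector"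
  assumes "\<forall>x\<in>S. 0 \<le> M x" "opnorm_tendsto_0 S M norm F" "opnorm_tendsto_0 S M norm G"
  shows "opnorm_tendsto_0 S M norm (\<lambda>eps x. F eps x - G eps x)"
proof (rule opnorm_tendsto_0I[OF assms(1), where C = 2])
  fix e :: real assume "e > 0"
  then have "\<forall>\<^sub>F eps in at_right 0. opnorm_le S M norm (F eps) e \<and> opnorm_le S M norm (G eps) e"
    using assms(2,3) unfolding opnorm_tendsto_0_def by (simp add: eventually_conj_iff)
  then show "\<forall>\<^sub>F eps in at_right 0. opnorm_le S M norm (\<lambda>x. F eps x - G eps x) (2 * e)"
    by (rule eventually_mono) (metis mult_2 opnorm_le_diff)
qed

lemma opnorm_tendsto_0_sum:
  fixes F :: "'i \<Rightarrow> real \<Rightarrow> 'v \<Rightarrow> 'k::real_normed_vector"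
  assumes "\<forall>x\<in>S. 0 \<le> M x" "\<And>i. i \<in> I \<Longrightarrow> opnorm_tendsto_0 S M norm (F i)"
  shows "opnorm_tendsto_0 S M norm (\<lambda>eps x. \<Sum>i\<in>I. F i eps x)"
  using assms(2)
proof (induction I rule: infinite_finite_induct)
  case (insert i I)
  then show ?case
    using opnorm_tendsto_0_add[OF assms(1), of "F i" "\<lambda>eps x. \<Sum>i\<in>I. F i eps x"] by simp
qed (use assms(1) in \<open>auto simp: opnorm_tendsto_0_def opnorm_le_def\<close>)

lemma opnorm_tendsto_0_cmult:
  fixes F :: "real \<Rightarrow> 'v \<Rightarrow> 'k::real_normed_algebra"
  assumes "\<forall>x\<in>S. 0 \<le> M x" "opnorm_tendsto_0 S M norm F"
  shows "opnorm_tendsto_0 S M norm (\<lambda>eps x. c * F eps x)"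
proof (rule opnorm_tendsto_0I[OF assms(1), where C = "norm c"])
  fix e :: real assume "e > 0"
  with assms(2) have "\<forall>\<^sub>F eps in at_right 0. opnorm_le S M norm (F eps) e"
    unfolding opnorm_tendsto_0_def by blast
  then show "\<forall>\<^sub>F eps in at_right 0. opnorm_le S M norm (\<lambda>x. c * F eps x) (norm c * e)"
    by (rule eventually_mono) (rule opnorm_le_cmult)
qed

lemma opnorm_tendsto_0_mult_bounded:
  fixes F :: "real \<Rightarrow> 'v \<Rightarrow> 'k::real_normed_algebra"
  assumes M: "\<forall>x\<in>S. 0 \<le> M x" and a: "(a \<longlongrightarrow> 0) (at_right 0)" and F: "bounded_near_0 S M F"
  shows "opnorm_tendsto_0 S M norm (\<lambda>eps x. a eps * F eps x)"
proof -
  obtain C where "C \<ge> 0" and C: "\<forall>\<^sub>F eps in at_right 0. opnorm_le S M norm (F eps) C"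
    using F unfolding bounded_near_0_def by blast
  show ?thesis
  proof (rule opnorm_tendsto_0I[OF M, where C = C])
    fix e :: real assume "e > 0"
    with a have "\<forall>\<^sub>F eps in at_right 0. norm (a eps) < e"
      by (auto simp: tendsto_iff)
    with C show "\<forall>\<^sub>F eps in at_right 0. opnorm_le S M norm (\<lambda>x. a eps * F eps x) (C * e)"
    proof eventually_elim
      case (elim eps)
      have "norm (a eps) * C \<le> C * e"
        using elim \<open>C \<ge> 0\<close> by (simp add: mult.commute mult_left_mono)
      then show ?case
        using opnorm_le_cmult[OF elim(1), of "a eps"] by (rule opnorm_le_mono[OF _ _ M, rotated])
    qed
  qed
qed

lemma opnorm_tendsto_0_comp:
  assumes M: "\<forall>x\<in>S. 0 \<le> M x" and F: "opnorm_tendsto_0 S' M' norm F" and T: "bounded_map S M S' M' T"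
  shows "opnorm_tendsto_0 S M norm (\<lambda>eps x. F eps (T x))"
proof -
  obtain C where "C \<ge> 0" "T ` S \<subseteq> S'" "opnorm_le S M M' T C"
    using T unfolding bounded_map_def by blast
  show ?thesis
  proof (rule opnorm_tendsto_0I[OF M, where C = C])
    fix e :: real assume "e > 0"
    with F have "\<forall>\<^sub>F eps in at_right 0. opnorm_le S' M' norm (F eps) e"
      unfolding opnorm_tendsto_0_def by blast
    then show "\<forall>\<^sub>F eps in at_right 0. opnorm_le S M norm (\<lambda>x. F eps (T x)) (C * e)"
    proof (rule eventually_mono)
      fix eps assume "opnorm_le S' M' norm (F eps) e"
      from opnorm_le_comp[OF this \<open>opnorm_le S M M' T C\<close> \<open>T ` S \<subseteq> S'\<close>] \<open>e > 0\<close>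
      show "opnorm_le S M norm (\<lambda>x. F eps (T x)) (C * e)" by (simp add: mult.commute)
    qed
  qed
qed

lemma opnorm_tendsto_0_cong:
  "opnorm_tendsto_0 S M M' F \<Longrightarrow> \<forall>\<^sub>F eps in at_right 0. \<forall>x\<in>S. G eps x = F eps x \<Longrightarrow>
    opnorm_tendsto_0 S M M' G"
  unfolding opnorm_tendsto_0_def opnorm_le_def by (auto elim: eventually_elim2)

lemma opnorm_tendsto_0_pointwise:
  fixes F :: "real \<Rightarrow> 'v \<Rightarrow> 'k::real_normed_vector"
  assumes F: "opnorm_tendsto_0 S M norm F" and y: "y \<in> S" "0 \<le> M y"
  shows "((\<lambda>eps. F eps y) \<longlongrightarrow> 0) (at_right 0)"
proof (rule tendstoI)
  fix e :: real assume e: "e > 0"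
  have "e / (M y + 1) * M y < e"
    using e y by (simp add: field_simps)
  moreover have "\<forall>\<^sub>F eps in at_right 0. opnorm_le S M norm (F eps) (e / (M y + 1))"
    using F e y unfolding opnorm_tendsto_0_def by simp
  ultimately show "\<forall>\<^sub>F eps in at_right 0. dist (F eps y) 0 < e"
    using y unfolding opnorm_le_def by (auto elim!: eventually_mono)
qed

lemma opnorm_tendsto_0_norm_mono:
  assumes "opnorm_tendsto_0 S M M'' F" "\<And>x. x \<in> S \<Longrightarrow> M x \<le> M' x"
  shows "opnorm_tendsto_0 S M' M'' F"
  unfolding opnorm_tendsto_0_def
proof (intro allI impI)
  fix e :: real assume "e > 0"
  with assms(1) have "\<forall>\<^sub>F eps in at_right 0. opnorm_le S M M'' (F eps) e"
    unfolding opnorm_tendsto_0_def by blast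
  then show "\<forall>\<^sub>F eps in at_right 0. opnorm_le S M' M'' (F eps) e"
    by (rule eventually_mono)
      (use assms(2) \<open>e > 0\<close> in \<open>force simp: opnorm_le_def intro: order_trans mult_left_mono\<close>)
qed

lemma opnorm_tendsto_0_comp_bounded:
  assumes M: "\<forall>x\<in>S. 0 \<le> M x" and F: "bounded_near_0 UNIV M' F" and T: "opnorm_tendsto_0 S M M' T"
  shows "opnorm_tendsto_0 S M norm (\<lambda>eps x. F eps (T eps x))"
proof -
  obtain C where "C \<ge> 0" and C: "\<forall>\<^sub>F eps in at_right 0. opnorm_le UNIV M' norm (F eps) C"
    using F unfolding bounded_near_0_def by blast
  show ?thesis
  proof (rule opnorm_tendsto_0I[OF M, where C = C])
    fix e :: real assume "e > 0"
    with T have "\<forall>\<^sub>F eps in at_right 0. opnorm_le S M M' (T eps) e"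
      unfolding opnorm_tendsto_0_def by blast
    with C show "\<forall>\<^sub>F eps in at_right 0. opnorm_le S M norm (\<lambda>x. F eps (T eps x)) (C * e)"
      by eventually_elim (rule opnorm_le_comp[OF _ _ subset_UNIV \<open>C \<ge> 0\<close>])
  qed
qed

lemma bounded_near_0_const:
  "bounded_map S M UNIV norm T \<Longrightarrow> bounded_near_0 S M (\<lambda>eps. T)"
  unfolding bounded_map_def bounded_near_0_def by simp

lemma bounded_near_0_if_opnorm_tendsto_0:
  "opnorm_tendsto_0 S M norm F \<Longrightarrow> bounded_near_0 S M F"
  unfolding opnorm_tendsto_0_def bounded_near_0_def by (meson zero_le_one zero_less_one)

lemma bounded_near_0_add:
  fixes F G :: "real \<Rightarrow> 'v \<Rightarrow> 'k::real_normed_vector"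
  assumes "bounded_near_0 S M F" "bounded_near_0 S M G"
  shows "bounded_near_0 S M (\<lambda>eps x. F eps x + G eps x)"
proof -
  obtain C D where "C \<ge> 0" "D \<ge> 0" and "\<forall>\<^sub>F eps in at_right 0. opnorm_le S M norm (F eps) C"
    and "\<forall>\<^sub>F eps in at_right 0. opnorm_le S M norm (G eps) D"
    using assms unfolding bounded_near_0_def by blast
  then show ?thesis
    unfolding bounded_near_0_def
    by (intro exI[of _ "C + D"]) (auto elim: eventually_elim2 intro: opnorm_le_add)
qed

lemma bounded_near_0_comp:
  assumes "bounded_near_0 S' M' F" "bounded_map S M S' M' T"
  shows "bounded_near_0 S M (\<lambda>eps x. F eps (T x))"
proof -
  obtain C D where "C \<ge> 0" "D \<ge> 0" "T ` S \<subseteq> S'" "opnorm_le S M M' T C"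
    and "\<forall>\<^sub>F eps in at_right 0. opnorm_le S' M' norm (F eps) D"
    using assms unfolding bounded_near_0_def bounded_map_def by blast
  then show ?thesis
    unfolding bounded_near_0_def
    by (intro exI[of _ "D * C"]) (auto elim!: eventually_mono intro: opnorm_le_comp)
qed

lemma Bfun_mult_tendsto_0:
  fixes a b :: "'a \<Rightarrow> 'k::real_normed_algebra"
  shows "Bfun a F \<Longrightarrow> (b \<longlongrightarrow> 0) F \<Longrightarrow> ((\<lambda>x. a x * b x) \<longlongrightarrow> 0) F"
  unfolding tendsto_Zfun_iff by (simp add: bounded_bilinear.Bfun_prod_Zfun[OF bounded_bilinear_mult])

section \<open>Remainders of truncated power expansions\<close>

definition expansion_remainder :: "(nat \<Rightarrow> 'a::field) \<Rightarrow> 'a \<Rightarrow> nat \<Rightarrow> 'a \<Rightarrow> 'a" where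
  "expansion_remainder c x m e = (x - (\<Sum>i=0..m. c i * e ^ i)) / e ^ m"

lemma expansion_remainder_expand:
  "e \<noteq> 0 \<Longrightarrow> x = (\<Sum>i=0..m. c i * e ^ i) + e ^ m * expansion_remainder c x m e"
  unfolding expansion_remainder_def by simp

lemma expansion_remainder_unique:
  "e \<noteq> 0 \<Longrightarrow> x = (\<Sum>i=0..m. c i * e ^ i) + e ^ m * r \<Longrightarrow> expansion_remainder c x m e = r"
  unfolding expansion_remainder_def by simp

lemma expansion_remainder_cong:
  assumes "\<And>i. i \<le> m \<Longrightarrow> c i = d i"
  shows "expansion_remainder c x m e = expansion_remainder d x m e"
proof -
  have "(\<Sum>i=0..m. c i * e ^ i) = (\<Sum>i=0..m. d i * e ^ i)"
    by (intro sum.cong) (auto simp: assms)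
  then show ?thesis unfolding expansion_remainder_def by simp
qed

lemma expansion_remainder_add:
  "expansion_remainder (\<lambda>i. c i + d i) (x + y) m e =
    expansion_remainder c x m e + expansion_remainder d y m e"
proof -
  have "x + y - (\<Sum>i=0..m. (c i + d i) * e ^ i) =
      (x - (\<Sum>i=0..m. c i * e ^ i)) + (y - (\<Sum>i=0..m. d i * e ^ i))"
    by (simp add: distrib_right sum.distrib)
  then show ?thesis unfolding expansion_remainder_def add_divide_distrib[symmetric] by (simp only:)
qed

lemma expansion_remainder_diff:
  "expansion_remainder (\<lambda>i. c i - d i) (x - y) m e =
    expansion_remainder c x m e - expansion_remainder d y m e"
proof -
  have "x - y - (\<Sum>i=0..m. (c i - d i) * e ^ i) =
      (x - (\<Sum>i=0..m. c i * e ^ i)) - (y - (\<Sum>i=0..m. d i * e ^ i))"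
    by (simp add: left_diff_distrib sum_subtractf)
  then show ?thesis unfolding expansion_remainder_def diff_divide_distrib[symmetric] by (simp only:)
qed

lemma expansion_remainder_cmult:
  "expansion_remainder (\<lambda>i. t * c i) (t * x) m e = t * expansion_remainder c x m e"
  unfolding expansion_remainder_def by (simp add: sum_distrib_left right_diff_distrib mult.assoc)

lemma expansion_remainder_const:
  "expansion_remainder (\<lambda>i. if i = 0 then x else 0) x m e = 0"
proof -
  have "(\<Sum>i=0..m. (if i = 0 then x else 0) * e ^ i) = (\<Sum>i=0..m. if i = 0 then x else 0)"
    by (intro sum.cong) auto
  then show ?thesis unfolding expansion_remainder_def by simp
qed

lemma expansion_remainder_add_power:
  "e \<noteq> 0 \<Longrightarrow> expansion_remainder c (x + e ^ m * r) m e = expansion_remainder c x m e + r"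
  unfolding expansion_remainder_def by (simp add: field_simps)

lemma expansion_remainder_shift:
  assumes "e \<noteq> 0" "j \<le> m"
  shows "e ^ j * x = (\<Sum>i=0..m-j. c i * e ^ (i + j)) + e ^ m * expansion_remainder c x (m - j) e"
proof -
  have "e ^ j * x = e ^ j * ((\<Sum>i=0..m-j. c i * e ^ i) + e ^ (m - j) * expansion_remainder c x (m - j) e)"
    using expansion_remainder_expand[OF assms(1)] by simp
  also have "\<dots> = (\<Sum>i=0..m-j. c i * e ^ (i + j)) + e ^ (j + (m - j)) * expansion_remainder c x (m - j) e"
    by (simp add: distrib_left sum_distrib_left power_add mult_ac)
  finally show ?thesis using assms(2) by simp
qed

lemma sum_triangle_reindex:
  fixes G :: "nat \<Rightarrow> nat \<Rightarrow> 'a::comm_monoid_add"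
  shows "(\<Sum>l=a..m. \<Sum>i=0..m-l. G l i) = (\<Sum>k=0..m. \<Sum>l=a..k. G l (k - l))"
proof (induction m)
  case (Suc m)
  show ?case
  proof (cases "Suc m < a")
    case True
    then have "(\<Sum>k=0..Suc m. \<Sum>l=a..k. G l (k - l)) = 0"
      by (intro sum.neutral) auto
    with True show ?thesis by simp
  next
    case False
    have "(\<Sum>l=a..Suc m. \<Sum>i=0..Suc m-l. G l i) = (\<Sum>l=a..m. \<Sum>i=0..Suc m-l. G l i) + G (Suc m) 0"
      using False by (simp only: sum.cl_ivl_Suc) simp
    also have "(\<Sum>l=a..m. \<Sum>i=0..Suc m-l. G l i) = (\<Sum>l=a..m. \<Sum>i=0..m-l. G l i) + (\<Sum>l=a..m. G l (Suc m - l))"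
      by (simp only: sum.distrib[symmetric]) (intro sum.cong, auto simp: Suc_diff_le)
    also have "\<dots> + G (Suc m) 0 = (\<Sum>k=0..m. \<Sum>l=a..k. G l (k - l)) + (\<Sum>l=a..Suc m. G l (Suc m - l))"
      using False Suc by (simp only: sum.cl_ivl_Suc add.assoc) simp
    finally show ?thesis
      by (simp only: sum.atLeast0_atMost_Suc)
  qed
qed simp

lemma expansion_remainder_series:
  assumes e: "e \<noteq> 0"
  shows "expansion_remainder (\<lambda>k. \<Sum>l=a..k. b l (k - l)) (\<Sum>l=a..m. e ^ l * x l) m e =
    (\<Sum>l=a..m. expansion_remainder (b l) (x l) (m - l) e)"
proof (rule expansion_remainder_unique[OF e])
  have "(\<Sum>l=a..m. e ^ l * x l) =
      (\<Sum>l=a..m. (\<Sum>i=0..m-l. b l i * e ^ (i + l)) + e ^ m * expansion_remainder (b l) (x l) (m - l) e)"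
    by (intro sum.cong) (auto simp: expansion_remainder_shift[OF e])
  also have "\<dots> = (\<Sum>l=a..m. \<Sum>i=0..m-l. b l i * e ^ (i + l)) +
      e ^ m * (\<Sum>l=a..m. expansion_remainder (b l) (x l) (m - l) e)"
    by (simp only: sum.distrib sum_distrib_left)
  also have "(\<Sum>l=a..m. \<Sum>i=0..m-l. b l i * e ^ (i + l)) =
      (\<Sum>k=0..m. \<Sum>l=a..k. b l (k - l) * e ^ (k - l + l))"
    by (rule sum_triangle_reindex)
  also have "(\<Sum>k=0..m. \<Sum>l=a..k. b l (k - l) * e ^ (k - l + l)) = (\<Sum>k=0..m. (\<Sum>l=a..k. b l (k - l)) * e ^ k)"
    by (intro sum.cong) (auto simp: sum_distrib_right)
  finally show "(\<Sum>l=a..m. e ^ l * x l) = (\<Sum>k=0..m. (\<Sum>l=a..k. b l (k - l)) * e ^ k) +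
      e ^ m * (\<Sum>l=a..m. expansion_remainder (b l) (x l) (m - l) e)" .
qed

lemma expansion_remainder_mult:
  assumes e: "e \<noteq> 0"
  shows "expansion_remainder (\<lambda>k. \<Sum>l=0..k. a l * b (k - l)) (x * y) m e =
    (\<Sum>l=0..m. a l * expansion_remainder b y (m - l) e) + expansion_remainder a x m e * y"
proof -
  have "x * y = ((\<Sum>l=0..m. a l * e ^ l) + e ^ m * expansion_remainder a x m e) * y"
    by (subst expansion_remainder_expand[OF e, where x = x and m = m and c = a]) (rule refl)
  also have "\<dots> = (\<Sum>l=0..m. e ^ l * (a l * y)) + e ^ m * (expansion_remainder a x m e * y)"
    by (simp add: distrib_left distrib_right sum_distrib_left sum_distrib_right mult_ac)
  finally have xy: "x * y = \<dots>" .
  have "expansion_remainder (\<lambda>k. \<Sum>l=0..k. a l * b (k - l)) (\<Sum>l=0..m. e ^ l * (a l * y)) m e =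
      (\<Sum>l=0..m. expansion_remainder (\<lambda>i. a l * b i) (a l * y) (m - l) e)"
    by (rule expansion_remainder_series[OF e])
  then show ?thesis
    unfolding xy by (simp add: expansion_remainder_add_power[OF e] expansion_remainder_cmult)
qed

section \<open>Reciprocal power series\<close>

lemma finite_compositions: "finite (compositions i l)"
proof (rule finite_subset)
  show "compositions i l \<subseteq> {xs. set xs \<subseteq> {0..i} \<and> length xs = l}"
    unfolding compositions_def using member_le_sum_list by fastforce
  show "finite {xs. set xs \<subseteq> {0..i::nat} \<and> length xs = l}"
    by (rule finite_lists_length_eq) simp
qed

lemma compositions_0: "compositions i 0 = (if i = 0 then {[]} else {})"
  unfolding compositions_def by auto

lemma compositions_eq_empty: "i < l \<Longrightarrow> compositions i l = {}"
proof -
  have "length js \<le> sum_list js" if "\<forall>j\<in>set js. 1 \<le> j" for js :: "nat list"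
    using that by (induction js) auto
  then show "i < l \<Longrightarrow> compositions i l = {}"
    unfolding compositions_def by fastforce
qed

lemma compositions_Suc:
  "compositions i (Suc l) = (\<lambda>(j, js). j # js) ` (SIGMA j:{1..i}. compositions (i - j) l)"
proof
  show "compositions i (Suc l) \<subseteq> (\<lambda>(j, js). j # js) ` (SIGMA j:{1..i}. compositions (i - j) l)"
  proof
    fix xs assume xs: "xs \<in> compositions i (Suc l)"
    then obtain j js where xs_eq: "xs = j # js"
      unfolding compositions_def by (cases xs) auto
    with xs have "j \<in> {1..i}" "js \<in> compositions (i - j) l"
      unfolding compositions_def by auto
    then show "xs \<in> (\<lambda>(j, js). j # js) ` (SIGMA j:{1..i}. compositions (i - j) l)"
      unfolding xs_eq by force
  qed
  show "(\<lambda>(j, js). j # js) ` (SIGMA j:{1..i}. compositions (i - j) l) \<subseteq> compositions i (Suc l)"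
    unfolding compositions_def by auto
qed

definition composition_sum :: "(nat \<Rightarrow> 'a::comm_ring_1) \<Rightarrow> nat \<Rightarrow> nat \<Rightarrow> 'a" where
  "composition_sum a i l = (\<Sum>js\<in>compositions i l. prod_list (map a js))"

text \<open>The coefficients of the power series \<open>1 / (1 + \<Sum>j\<ge>1. a j * x ^ j)\<close>.\<close>

definition recip_coeff :: "(nat \<Rightarrow> 'a::comm_ring_1) \<Rightarrow> nat \<Rightarrow> 'a" where
  "recip_coeff a i = (\<Sum>l=0..i. (-1) ^ l * composition_sum a i l)"

lemma composition_sum_0: "composition_sum a i 0 = (if i = 0 then 1 else 0)"
  unfolding composition_sum_def compositions_0 by simp

lemma composition_sum_eq_0: "i < l \<Longrightarrow> composition_sum a i l = 0"
  unfolding composition_sum_def by (simp add: compositions_eq_empty)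

lemma composition_sum_Suc: "composition_sum a i (Suc l) = (\<Sum>j=1..i. a j * composition_sum a (i - j) l)"
proof -
  have inj: "inj_on (\<lambda>(j, js). j # js) (SIGMA j:{1..i}. compositions (i - j) l)"
    by (auto simp: inj_on_def)
  have "composition_sum a i (Suc l) =
      (\<Sum>(j, js)\<in>(SIGMA j:{1..i}. compositions (i - j) l). a j * prod_list (map a js))"
    unfolding composition_sum_def compositions_Suc sum.reindex[OF inj] by (intro sum.cong) auto
  also have "\<dots> = (\<Sum>j=1..i. \<Sum>js\<in>compositions (i - j) l. a j * prod_list (map a js))"
    by (rule sum.Sigma[symmetric]) (auto simp: finite_compositions)
  finally show ?thesis
    unfolding composition_sum_def by (simp add: sum_distrib_left)
qed

lemma recip_coeff_0: "recip_coeff a 0 = 1"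
  unfolding recip_coeff_def by (simp add: composition_sum_0)

lemma recip_coeff_rec: "1 \<le> i \<Longrightarrow> recip_coeff a i = - (\<Sum>j=1..i. a j * recip_coeff a (i - j))"
proof -
  assume "1 \<le> i"
  then obtain p where p: "i = Suc p" by (cases i) auto
  have "recip_coeff a i = (\<Sum>l=0..p. (-1) ^ Suc l * composition_sum a i (Suc l))"
    unfolding recip_coeff_def p sum.atLeast0_atMost_Suc_shift by (simp add: composition_sum_0)
  also have "\<dots> = (\<Sum>l=0..p. \<Sum>j=1..i. - (a j * ((-1) ^ l * composition_sum a (i - j) l)))"
    by (simp add: composition_sum_Suc sum_distrib_left algebra_simps)
  also have "\<dots> = (\<Sum>j=1..i. - (a j * (\<Sum>l=0..p. (-1) ^ l * composition_sum a (i - j) l)))"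
    by (subst sum.swap) (simp add: sum_distrib_left sum_negf)
  also have "\<dots> = (\<Sum>j=1..i. - (a j * recip_coeff a (i - j)))"
    unfolding recip_coeff_def
    by (intro sum.cong refl arg_cong[where f = "\<lambda>t. - (a _ * t)"] sum.mono_neutral_right)
      (auto simp: p composition_sum_eq_0)
  finally show ?thesis by (simp add: sum_negf)
qed

lemma recip_coeff_convolution:
  assumes "a 0 = 1"
  shows "(\<Sum>l=0..k. a l * recip_coeff a (k - l)) = (if k = 0 then 1 else 0)"
proof (cases "k = 0")
  case False
  then have "(\<Sum>l=0..k. a l * recip_coeff a (k - l)) = recip_coeff a k + (\<Sum>l=1..k. a l * recip_coeff a (k - l))"
    using assms by (simp add: sum.atLeast_Suc_atMost)
  with False show ?thesis by (simp add: recip_coeff_rec)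
qed (simp add: assms recip_coeff_0)

lemma sum_compositions_eq_recip_coeff:
  assumes "1 \<le> i"
  shows "(\<Sum>l=1..i. \<Sum>js\<in>compositions i l. (-1) ^ l * prod_list (map a js)) = recip_coeff a i"
proof -
  have "recip_coeff a i = (\<Sum>l=1..i. (-1) ^ l * composition_sum a i l)"
    unfolding recip_coeff_def using assms
    by (subst sum.atLeast_Suc_atMost) (auto simp: composition_sum_0)
  then show ?thesis unfolding composition_sum_def by (simp add: sum_distrib_left)
qed

section \<open>The perturbation setting\<close>

declare kap.simps [simp del]

locale spectral_perturbation =
  fixes sc :: "'k::real_normed_field \<Rightarrow> 'v::ab_group_add \<Rightarrow> 'v"
    and n :: nat
    and B :: "nat \<Rightarrow> 'v set" and N :: "nat \<Rightarrow> 'v \<Rightarrow> real"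
    and L :: "nat \<Rightarrow> 'v \<Rightarrow> 'v" and Leps :: "real \<Rightarrow> 'v \<Rightarrow> 'v"
    and lam :: 'k and h :: 'v and nu :: "'v \<Rightarrow> 'k"
    and lameps :: "real \<Rightarrow> 'k" and nueps :: "real \<Rightarrow> 'v \<Rightarrow> 'k"
  assumes vs: "vector_space sc"
    and B0: "B 0 = UNIV"
    and B_subspace: "\<And>k. k \<le> n + 1 \<Longrightarrow> module.subspace sc (B k)"
    and B_Suc_subset: "\<And>k. k \<le> n \<Longrightarrow> B (Suc k) \<subseteq> B k"
    and N_nonneg: "\<And>k x. k \<le> n + 1 \<Longrightarrow> x \<in> B k \<Longrightarrow> 0 \<le> N k x"
    and h_in: "h \<in> B (n + 1)"
    and nu_lin: "lin_on sc (*) UNIV nu"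
    and nu_eig: "\<And>f. nu (L 0 f) = lam * nu f"
    and h_eig: "L 0 h = sc lam h" and nu_h: "nu h = 1"
    and R_inv: "\<And>f. f \<in> B 1 \<Longrightarrow> \<exists>!g. Rop sc (L 0) lam h nu g - sc lam g = f"
    and nueps_lin: "\<And>eps. 0 < eps \<Longrightarrow> eps < 1 \<Longrightarrow> lin_on sc (*) UNIV (nueps eps)"
    and nueps_eig: "\<And>eps f. 0 < eps \<Longrightarrow> eps < 1 \<Longrightarrow>
                      nueps eps (Leps eps f) = lameps eps * nueps eps f"
    and nueps_h: "\<And>eps. 0 < eps \<Longrightarrow> eps < 1 \<Longrightarrow> nueps eps h \<noteq> 0"
    and nu_bdd: "bounded_functional sc (B 0) (N 0) nu"
    and L_bdd: "\<And>j i. j \<le> n \<Longrightarrow> j \<le> i \<Longrightarrow> i \<le> n + 1 \<Longrightarrow>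
                  bounded_op sc sc (B i) (N i) (B (i - j)) (N (i - j)) (L j)"
    and kappa_bdd: "\<exists>C. \<forall>eps. 0 < eps \<and> eps < 1 \<longrightarrow> opnorm_le (B 0) (N 0) norm (kappa_eps nueps h eps) C"
    and R_bdd1: "bounded_op sc sc (B 1) (N 1) (B 0) (N 0) (Rlam sc (L 0) lam h nu)"
    and R_bdd: "\<And>j. 1 \<le> j \<Longrightarrow> j \<le> n + 1 \<Longrightarrow>
                  bounded_op sc sc (B j) (N j) (B j) (N j) (Rlam sc (L 0) lam h nu)"
    and L_tendsto: "\<And>j. j \<le> n \<Longrightarrow> opnorm_tendsto_0 (B (j + 1)) (N (j + 1)) (N 0) (tildeL sc L Leps j)"
begin

abbreviation "R \<equiv> Rlam sc (L 0) lam h nu"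
abbreviation "\<kappa> \<equiv> kap sc L h nu R"
abbreviation "lam_coeff \<equiv> lamk sc L h nu R"
abbreviation "\<kappa>_eps \<equiv> kappa_eps nueps h"
abbreviation "\<kappa>_rem \<equiv> tildekappa sc L h nu R nueps"
abbreviation "Nk \<equiv> normk N"

lemma module_sc: "module sc"
  using vs by (simp add: module_iff_vector_space)

lemma B_antimono: "i \<le> k \<Longrightarrow> k \<le> n + 1 \<Longrightarrow> B k \<subseteq> B i"
proof (induction k rule: dec_induct)
  case (step k)
  then show ?case using B_Suc_subset[of k] by auto
qed simp

lemma B_add: "k \<le> n + 1 \<Longrightarrow> x \<in> B k \<Longrightarrow> y \<in> B k \<Longrightarrow> x + y \<in> B k"
  using module.subspace_add[OF module_sc B_subspace] by blast

lemma B_scale: "k \<le> n + 1 \<Longrightarrow> x \<in> B k \<Longrightarrow> sc c x \<in> B k"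
  using module.subspace_scale[OF module_sc B_subspace] by blast

lemma Nk_nonneg:
  assumes "k \<le> n + 1"
  shows "\<forall>x\<in>B k. 0 \<le> Nk k x"
proof (cases "k = 0")
  case False
  show ?thesis
  proof
    fix x assume "x \<in> B k"
    then have "x \<in> B 1" using B_antimono[of 1 k] False assms by auto
    then have "0 \<le> N 1 x" using N_nonneg[of 1] assms by simp
    also have "\<dots> \<le> Nk k x" using N_le_normk[of 1 k] False by simp
    finally show "0 \<le> Nk k x" .
  qed
qed (simp add: N_nonneg)

lemma bounded_map_restrict:
  assumes "bounded_map (B i) (N i) S' M' T" "1 \<le> i" "i \<le> p" "p \<le> n + 1"
  shows "bounded_map (B p) (Nk p) S' M' T"
proof -
  obtain C where "C \<ge> 0" "T ` B i \<subseteq> S'" and C: "opnorm_le (B i) (N i) M' T C"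
    using assms(1) unfolding bounded_map_def by blast
  moreover have Bp: "B p \<subseteq> B i" using B_antimono assms(3,4) .
  moreover have "opnorm_le (B p) (Nk p) M' T C"
    unfolding opnorm_le_def
  proof
    fix x assume "x \<in> B p"
    with Bp C have "M' (T x) \<le> C * N i x" unfolding opnorm_le_def by blast
    also have "\<dots> \<le> C * Nk p x"
      using \<open>C \<ge> 0\<close> N_le_normk[OF assms(2,3), of N x] by (rule mult_left_mono[rotated])
    finally show "M' (T x) \<le> C * Nk p x" .
  qed
  ultimately show ?thesis unfolding bounded_map_def by blast
qed

lemma R_bounded_map:
  assumes "1 \<le> p" "i \<le> p" "p \<le> n + 1"
  shows "bounded_map (B p) (Nk p) (B i) (Nk i) R"
proof (rule bounded_map_normk)
  show "R ` B p \<subseteq> B i"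
    using R_bdd[of p] B_antimono[of i p] assms unfolding bounded_op_def by blast
  show "\<forall>x\<in>B p. 0 \<le> Nk p x" using Nk_nonneg assms(3) .
  show "\<exists>C. opnorm_le (B p) (Nk p) (N i') R C" if "1 \<le> i'" "i' \<le> i" for i'
  proof -
    have "bounded_map (B i') (N i') (B i') (N i') R"
      using bounded_op_imp_bounded_map[OF R_bdd[of i']] that assms by (simp add: N_nonneg)
    then show ?thesis
      using that assms by (intro bounded_map_opnorm_le bounded_map_restrict[of i']) auto
  qed
  show "\<exists>C. opnorm_le (B p) (Nk p) (N 0) R C"
  proof -
    have "bounded_map (B 1) (N 1) (B 0) (N 0) R"
      using bounded_op_imp_bounded_map[OF R_bdd1] by (simp add: N_nonneg)
    then show ?thesis
      using assms by (intro bounded_map_opnorm_le bounded_map_restrict[of 1]) auto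
  qed
qed

lemma L_bounded_map:
  assumes "1 \<le> j" "j \<le> n" "j \<le> p" "p \<le> n + 1"
  shows "bounded_map (B p) (Nk p) (B (p - j)) (Nk (p - j)) (L j)"
proof (rule bounded_map_normk)
  show "L j ` B p \<subseteq> B (p - j)"
    using L_bdd[of j p] assms unfolding bounded_op_def by blast
  show "\<forall>x\<in>B p. 0 \<le> Nk p x" using Nk_nonneg assms(4) .
  show "\<exists>C. opnorm_le (B p) (Nk p) (N i) (L j) C" if "1 \<le> i" "i \<le> p - j" for i
  proof -
    have "bounded_map (B (i + j)) (N (i + j)) (B i) (N i) (L j)"
      using bounded_op_imp_bounded_map[OF L_bdd[of j "i + j"]] that assms by (simp add: N_nonneg)
    then show ?thesis
      using that assms by (intro bounded_map_opnorm_le bounded_map_restrict[of "i + j"]) auto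
  qed
  show "\<exists>C. opnorm_le (B p) (Nk p) (N 0) (L j) C" if "p - j = 0"
  proof -
    have "bounded_map (B j) (N j) (B 0) (N 0) (L j)"
      using bounded_op_imp_bounded_map[OF L_bdd[of j j]] assms by (simp add: N_nonneg)
    then show ?thesis
      using that assms by (intro bounded_map_opnorm_le bounded_map_restrict[of j]) auto
  qed
qed

lemma incl_bounded_map:
  assumes "1 \<le> i" "i \<le> p" "p \<le> n + 1"
  shows "bounded_map (B p) (Nk p) (B i) (Nk i) (\<lambda>x. x)"
  using B_antimono[OF assms(2,3)] normk_mono[OF assms(1,2)]
  unfolding bounded_map_def opnorm_le_def by (intro conjI exI[of _ 1]) auto

lemma kappa_eps_lin: "0 < eps \<Longrightarrow> eps < 1 \<Longrightarrow> lin_on sc (*) UNIV (\<kappa>_eps eps)"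
  using nueps_lin unfolding lin_on_def kappa_eps_def by (simp add: add_divide_distrib)

lemma kappa_eps_diff: "0 < eps \<Longrightarrow> eps < 1 \<Longrightarrow> \<kappa>_eps eps (x - y) = \<kappa>_eps eps x - \<kappa>_eps eps y"
  using kappa_eps_lin by (blast intro: additive.diff lin_on_UNIV_additive)

lemma kappa_eps_sum: "0 < eps \<Longrightarrow> eps < 1 \<Longrightarrow> \<kappa>_eps eps (sum f A) = (\<Sum>a\<in>A. \<kappa>_eps eps (f a))"
  using kappa_eps_lin by (blast intro: additive.sum lin_on_UNIV_additive)

lemma kappa_eps_scale: "0 < eps \<Longrightarrow> eps < 1 \<Longrightarrow> \<kappa>_eps eps (sc c x) = c * \<kappa>_eps eps x"
  using kappa_eps_lin unfolding lin_on_def by blast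

lemma kappa_eps_h: "0 < eps \<Longrightarrow> eps < 1 \<Longrightarrow> \<kappa>_eps eps h = 1"
  using nueps_h unfolding kappa_eps_def by simp

lemma kappa_eps_bounded: "bounded_near_0 (B 0) (Nk 0) \<kappa>_eps"
proof -
  obtain C where C: "\<forall>eps. 0 < eps \<and> eps < 1 \<longrightarrow> opnorm_le (B 0) (N 0) norm (\<kappa>_eps eps) C"
    using kappa_bdd by blast
  from eventually_at_right_0_1 have "\<forall>\<^sub>F eps in at_right 0. opnorm_le (B 0) (N 0) norm (\<kappa>_eps eps) \<bar>C\<bar>"
    by (rule eventually_mono) (use C N_nonneg[of 0] in \<open>auto intro: opnorm_le_mono\<close>)
  then show ?thesis
    unfolding bounded_near_0_def by (intro exI[of _ "\<bar>C\<bar>"]) simp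
qed

lemma resolvent_eq:
  assumes "x \<in> B 1"
  shows "L 0 (R x) - sc lam (sc (nu (R x)) h) - sc lam (R x) = x"
  using theI'[OF R_inv[OF assms]] unfolding Rlam_def Rop_def .

lemma nu_resolvent:
  assumes "x \<in> B 1"
  shows "nu x = - lam * nu (R x)"
proof -
  have nu_diff: "nu (a - b) = nu a - nu b" for a b
    using nu_lin by (blast intro: additive.diff lin_on_UNIV_additive)
  have nu_scale: "nu (sc c a) = c * nu a" for c a
    using nu_lin unfolding lin_on_def by blast
  have "nu x = nu (L 0 (R x) - sc lam (sc (nu (R x)) h) - sc lam (R x))"
    using resolvent_eq[OF assms] by simp
  also have "\<dots> = lam * nu (R x) - lam * (nu (R x) * nu h) - lam * nu (R x)"
    by (simp only: nu_diff nu_scale nu_eig)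
  also have "\<dots> = - lam * nu (R x)"
    by (simp add: nu_h)
  finally show ?thesis .
qed

lemma kappa_eps_resolvent:
  assumes "x \<in> B 1" "0 < eps" "eps < 1"
  shows "\<kappa>_eps eps x = nu x + (\<kappa>_eps eps (L 0 (R x)) - lam * \<kappa>_eps eps (R x))"
proof -
  have "\<kappa>_eps eps x = \<kappa>_eps eps (L 0 (R x) - sc lam (sc (nu (R x)) h) - sc lam (R x))"
    using resolvent_eq[OF assms(1)] by simp
  also have "\<dots> = \<kappa>_eps eps (L 0 (R x)) - lam * nu (R x) - lam * \<kappa>_eps eps (R x)"
    using assms(2,3) by (simp add: kappa_eps_diff kappa_eps_scale kappa_eps_h)
  finally show ?thesis
    using nu_resolvent[OF assms(1)] by simp
qed

lemma nu_bounded_B0: "bounded_map (B 0) (Nk 0) UNIV norm nu"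
  using bounded_op_imp_bounded_map[of sc "(*)" "B 0" "N 0" UNIV norm nu] nu_bdd N_nonneg[of 0]
  unfolding bounded_functional_def by simp

lemma nu_bounded_B1: "bounded_map (B 1) (Nk 1) UNIV norm nu"
proof -
  have "bounded_map (B 1) (Nk 1) UNIV norm (\<lambda>x. nu (R x))"
    by (rule bounded_map_comp[OF R_bounded_map nu_bounded_B0]) auto
  then have "bounded_map (B 1) (Nk 1) UNIV norm (\<lambda>x. - lam * nu (R x))"
    by (rule bounded_map_cmult)
  then show ?thesis
    by (rule bounded_map_cong) (simp add: nu_resolvent)
qed

lemma kap_0: "\<kappa> 0 f = nu f"
  by (subst kap.simps) simp

lemma kap_pos: "0 < k \<Longrightarrow> \<kappa> k x = (\<Sum>j=1..k. \<kappa> (k - j) (sc (lam_coeff j) (R x) - L j (R x)))"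
  by (subst kap.simps) (simp add: lamk_def)

lemma kap_expand_lin:
  assumes k: "1 \<le> k" "k \<le> n" and x: "x \<in> B k"
    and lin: "\<And>j. 1 \<le> j \<Longrightarrow> j \<le> k \<Longrightarrow> lin_on sc (*) (B (k - j)) (\<kappa> (k - j))"
  shows "\<kappa> k x = (\<Sum>j=1..k. lam_coeff j * \<kappa> (k - j) (R x) - \<kappa> (k - j) (L j (R x)))"
  unfolding kap_pos[OF k(1)[unfolded One_nat_def Suc_le_eq]]
proof (rule sum.cong[OF refl])
  fix j assume j: "j \<in> {1..k}"
  have "R x \<in> B k" using R_bdd[of k] k x unfolding bounded_op_def by auto
  then have Rx: "R x \<in> B (k - j)" using B_antimono[of "k - j" k] k by auto
  have LRx: "L j (R x) \<in> B (k - j)"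
    using L_bdd[of j k] j k \<open>R x \<in> B k\<close> unfolding bounded_op_def by auto
  have lin_j: "lin_on sc (*) (B (k - j)) (\<kappa> (k - j))" using lin j by auto
  have "\<kappa> (k - j) (sc (lam_coeff j) (R x) - L j (R x)) =
      \<kappa> (k - j) (sc (lam_coeff j) (R x)) - \<kappa> (k - j) (L j (R x))"
    using k by (intro lin_on_subspace_diff[OF module_sc lin_j B_subspace] B_scale Rx LRx) auto
  also have "\<kappa> (k - j) (sc (lam_coeff j) (R x)) = lam_coeff j * \<kappa> (k - j) (R x)"
    using lin_j Rx unfolding lin_on_def by blast
  finally show "\<kappa> (k - j) (sc (lam_coeff j) (R x) - L j (R x)) =
      lam_coeff j * \<kappa> (k - j) (R x) - \<kappa> (k - j) (L j (R x))" .
qed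

lemma kap_lin: "k \<le> n \<Longrightarrow> lin_on sc (*) (B k) (\<kappa> k)"
proof (induction k rule: less_induct)
  case (less k)
  show ?case
  proof (cases "k = 0")
    case True
    then show ?thesis using nu_lin by (simp add: kap_0 B0)
  next
    case False
    have lin: "lin_on sc (*) (B (k - j)) (\<kappa> (k - j))" if "1 \<le> j" "j \<le> k" for j
      using less that False by auto
    have "lin_on sc (*) (B k) (\<lambda>x. \<Sum>j=1..k. lam_coeff j * \<kappa> (k - j) (R x) - \<kappa> (k - j) (L j (R x)))"
    proof (intro lin_on_sum lin_on_diff lin_on_cmult)
      fix j assume j: "j \<in> {1..k}"
      have R: "lin_on sc sc (B k) R" "R ` B k \<subseteq> B k"
        using R_bdd[of k] False less.prems unfolding bounded_op_def by auto
      then have R': "R ` B k \<subseteq> B (k - j)" using B_antimono[of "k - j" k] less.prems by auto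
      have L: "lin_on sc sc (B k) (L j)" "L j ` B k \<subseteq> B (k - j)"
        using L_bdd[of j k] j less.prems unfolding bounded_op_def by auto
      have lin_j: "lin_on sc (*) (B (k - j)) (\<kappa> (k - j))" using lin j by auto
      show "lin_on sc (*) (B k) (\<lambda>x. \<kappa> (k - j) (R x))"
        by (rule lin_on_comp[OF R(1) R' lin_j])
      have "lin_on sc sc (B k) (\<lambda>x. L j (R x))" by (rule lin_on_comp[OF R L(1)])
      moreover have "(\<lambda>x. L j (R x)) ` B k \<subseteq> B (k - j)" using R(2) L(2) by auto
      ultimately show "lin_on sc (*) (B k) (\<lambda>x. \<kappa> (k - j) (L j (R x)))"
        using lin_j by (rule lin_on_comp)
    qed
    then show ?thesis
    proof (rule lin_on_cong)
      show "\<kappa> k x = (\<Sum>j=1..k. lam_coeff j * \<kappa> (k - j) (R x) - \<kappa> (k - j) (L j (R x)))"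
        if "x \<in> B k" for x
        using kap_expand_lin[OF _ less.prems that lin] False by auto
      show "\<forall>x\<in>B k. \<forall>y\<in>B k. x + y \<in> B k" "\<forall>c. \<forall>x\<in>B k. sc c x \<in> B k"
        using B_add B_scale less.prems by auto
    qed
  qed
qed

lemma kap_expand:
  "1 \<le> k \<Longrightarrow> k \<le> n \<Longrightarrow> x \<in> B k \<Longrightarrow>
    \<kappa> k x = (\<Sum>j=1..k. lam_coeff j * \<kappa> (k - j) (R x) - \<kappa> (k - j) (L j (R x)))"
  by (rule kap_expand_lin) (auto intro: kap_lin)

lemma kap_bounded: "k \<le> n \<Longrightarrow> bounded_map (B k) (Nk k) UNIV norm (\<kappa> k)"
proof (induction k rule: less_induct)
  case (less k)
  show ?case
  proof (cases "k = 0")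
    case True
    then show ?thesis using nu_bounded_B0 by (simp add: kap_0[abs_def])
  next
    case False
    have "bounded_map (B k) (Nk k) UNIV norm
        (\<lambda>x. \<Sum>j=1..k. lam_coeff j * \<kappa> (k - j) (R x) - \<kappa> (k - j) (L j (R x)))"
    proof (intro bounded_map_sum bounded_map_diff bounded_map_cmult)
      fix j assume j: "j \<in> {1..k}"
      then have IH: "bounded_map (B (k - j)) (Nk (k - j)) UNIV norm (\<kappa> (k - j))"
        using less False by auto
      show "bounded_map (B k) (Nk k) UNIV norm (\<lambda>x. \<kappa> (k - j) (R x))"
        using False less.prems by (intro bounded_map_comp[OF R_bounded_map IH]) auto
      show "bounded_map (B k) (Nk k) UNIV norm (\<lambda>x. \<kappa> (k - j) (L j (R x)))"
        using False less.prems j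
        by (intro bounded_map_comp[OF bounded_map_comp[OF R_bounded_map L_bounded_map] IH]) auto
    qed
    then show ?thesis
      by (rule bounded_map_cong) (use kap_expand False less.prems in auto)
  qed
qed

theorem kap_bounded_functional: "k \<le> n \<Longrightarrow> bounded_functional sc (B k) (Nk k) (\<kappa> k)"
  by (intro bounded_functionalI kap_lin kap_bounded)

section \<open>Expansion of \<open>\<kappa>(\<epsilon>, \<cdot>)\<close>\<close>

definition pert_coeff :: "'v \<Rightarrow> nat \<Rightarrow> 'k" where
  "pert_coeff y k = (\<Sum>j=1..k. \<kappa> (k - j) (L j y))"

abbreviation "lam_rem m eps \<equiv> expansion_remainder lam_coeff (lameps eps - lam) m (of_real eps)"

lemma lam_coeff_eq_pert_coeff: "lam_coeff = pert_coeff h"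
  unfolding lamk_def[abs_def] pert_coeff_def[abs_def] ..

lemma kappa_rem_eq: "\<kappa>_rem k eps f = expansion_remainder (\<lambda>i. \<kappa> i f) (\<kappa>_eps eps f) k (of_real eps)"
proof -
  have "(\<Sum>i=0..k. \<kappa> i f * of_real eps ^ i) = nu f + (\<Sum>i=1..k. \<kappa> i f * of_real eps ^ i)"
    by (simp add: sum.atLeast_Suc_atMost kap_0)
  then show ?thesis
    unfolding tildekappa_def expansion_remainder_def by (simp add: diff_diff_eq)
qed

lemma kappa_eps_perturbation_expand:
  assumes "0 < eps" "eps < 1"
  shows "\<kappa>_eps eps (Leps eps y) - \<kappa>_eps eps (L 0 y) =
    (\<Sum>j=1..m. of_real eps ^ j * \<kappa>_eps eps (L j y)) + of_real eps ^ m * \<kappa>_eps eps (tildeL sc L Leps m eps y)"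
proof -
  have "(of_real eps :: 'k) ^ m \<noteq> 0" using assms by simp
  moreover have "\<kappa>_eps eps (tildeL sc L Leps m eps y) = inverse (of_real eps ^ m) *
      (\<kappa>_eps eps (Leps eps y) - \<kappa>_eps eps (L 0 y) - (\<Sum>j=1..m. of_real eps ^ j * \<kappa>_eps eps (L j y)))"
    unfolding tildeL_def using assms by (simp add: kappa_eps_scale kappa_eps_diff kappa_eps_sum)
  ultimately show ?thesis by (simp add: field_simps)
qed

lemma perturbation_remainder:
  assumes eps: "0 < eps" "eps < 1"
  shows "expansion_remainder (pert_coeff y) (\<kappa>_eps eps (Leps eps y) - \<kappa>_eps eps (L 0 y)) m (of_real eps) =
    (\<Sum>j=1..m. \<kappa>_rem (m - j) eps (L j y)) + \<kappa>_eps eps (tildeL sc L Leps m eps y)"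
proof -
  have e: "(of_real eps :: 'k) \<noteq> 0" using eps by simp
  have "expansion_remainder (pert_coeff y) (\<Sum>j=1..m. of_real eps ^ j * \<kappa>_eps eps (L j y)) m (of_real eps) =
      (\<Sum>j=1..m. expansion_remainder (\<lambda>i. \<kappa> i (L j y)) (\<kappa>_eps eps (L j y)) (m - j) (of_real eps))"
    unfolding pert_coeff_def[abs_def] by (rule expansion_remainder_series[OF e])
  then show ?thesis
    unfolding kappa_eps_perturbation_expand[OF eps, of y m] expansion_remainder_add_power[OF e]
    by (simp add: kappa_rem_eq)
qed

lemma lameps_remainder:
  assumes eps: "0 < eps" "eps < 1"
  shows "lam_rem m eps =
    (\<Sum>j=1..m. \<kappa>_rem (m - j) eps (L j h)) + \<kappa>_eps eps (tildeL sc L Leps m eps h)"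
proof -
  have "\<kappa>_eps eps (Leps eps h) = lameps eps"
    using nueps_eig[OF eps] nueps_h[OF eps] unfolding kappa_eps_def by simp
  moreover have "\<kappa>_eps eps (L 0 h) = lam"
    using eps by (simp add: h_eig kappa_eps_scale kappa_eps_h)
  ultimately show ?thesis
    using perturbation_remainder[OF eps, of h m] by (simp add: lam_coeff_eq_pert_coeff)
qed

lemma lam_coeff_0: "lam_coeff 0 = 0"
  unfolding lamk_def by simp

lemma kap_resolvent_coeff:
  assumes "x \<in> B (m + 1)" "i \<le> m" "m \<le> n"
  shows "\<kappa> i x = (if i = 0 then nu x else 0)
    + ((\<Sum>l=0..i. lam_coeff l * \<kappa> (i - l) (R x)) - pert_coeff (R x) i)"
proof (cases "i = 0")
  case True
  then show ?thesis by (simp add: kap_0 lam_coeff_0 pert_coeff_def)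
next
  case False
  have "x \<in> B i" using assms B_antimono[of i "m + 1"] by auto
  with False assms have "\<kappa> i x = (\<Sum>l=1..i. lam_coeff l * \<kappa> (i - l) (R x)) - pert_coeff (R x) i"
    by (simp add: kap_expand pert_coeff_def sum_subtractf)
  with False show ?thesis
    by (simp add: sum.atLeast_Suc_atMost lam_coeff_0)
qed

lemma kappa_rem_recursion:
  assumes m: "m \<le> n" and x: "x \<in> B (m + 1)" and eps: "0 < eps" "eps < 1"
  shows "\<kappa>_rem m eps x =
    (\<Sum>j=1..m. lam_coeff j * \<kappa>_rem (m - j) eps (R x)) + lam_rem m eps * \<kappa>_eps eps (R x)
    - ((\<Sum>j=1..m. \<kappa>_rem (m - j) eps (L j (R x))) + \<kappa>_eps eps (tildeL sc L Leps m eps (R x)))"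
proof -
  define e where "e = (of_real eps :: 'k)"
  define g where "g = R x"
  have e: "e \<noteq> 0" using eps by (simp add: e_def)
  have "\<kappa>_eps eps (Leps eps g) = lameps eps * \<kappa>_eps eps g"
    using nueps_eig[OF eps] unfolding kappa_eps_def by simp
  with kappa_eps_resolvent[of x eps] x m eps have \<kappa>_x:
    "\<kappa>_eps eps x = nu x + ((lameps eps - lam) * \<kappa>_eps eps g
       - (\<kappa>_eps eps (Leps eps g) - \<kappa>_eps eps (L 0 g)))"
    using B_antimono[of 1 "m + 1"] by (auto simp: g_def algebra_simps)
  have "\<kappa>_rem m eps x = expansion_remainder
      (\<lambda>i. (if i = 0 then nu x else 0) + ((\<Sum>l=0..i. lam_coeff l * \<kappa> (i - l) g) - pert_coeff g i))
      (nu x + ((lameps eps - lam) * \<kappa>_eps eps g - (\<kappa>_eps eps (Leps eps g) - \<kappa>_eps eps (L 0 g)))) m e"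
    unfolding kappa_rem_eq \<kappa>_x e_def[symmetric] g_def
    by (rule expansion_remainder_cong) (rule kap_resolvent_coeff[OF x _ m])
  also have "\<dots> = expansion_remainder (\<lambda>i. \<Sum>l=0..i. lam_coeff l * \<kappa> (i - l) g)
        ((lameps eps - lam) * \<kappa>_eps eps g) m e
      - expansion_remainder (pert_coeff g) (\<kappa>_eps eps (Leps eps g) - \<kappa>_eps eps (L 0 g)) m e"
    by (simp only: expansion_remainder_add expansion_remainder_diff expansion_remainder_const add_0)
  also have "expansion_remainder (\<lambda>i. \<Sum>l=0..i. lam_coeff l * \<kappa> (i - l) g)
        ((lameps eps - lam) * \<kappa>_eps eps g) m e =
      (\<Sum>l=1..m. lam_coeff l * \<kappa>_rem (m - l) eps g) + lam_rem m eps * \<kappa>_eps eps g"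
    using expansion_remainder_mult[OF e, of lam_coeff "\<lambda>i. \<kappa> i g" "lameps eps - lam" "\<kappa>_eps eps g" m]
    by (simp add: kappa_rem_eq e_def sum.atLeast_Suc_atMost lam_coeff_0)
  finally show ?thesis
    unfolding e_def g_def perturbation_remainder[OF eps] .
qed

lemma kappa_eps_tildeL_tendsto_0:
  assumes "m \<le> n"
  shows "opnorm_tendsto_0 (B (m + 1)) (Nk (m + 1)) norm (\<lambda>eps y. \<kappa>_eps eps (tildeL sc L Leps m eps y))"
proof (rule opnorm_tendsto_0_norm_mono)
  show "opnorm_tendsto_0 (B (m + 1)) (N (m + 1)) norm (\<lambda>eps y. \<kappa>_eps eps (tildeL sc L Leps m eps y))"
  proof (rule opnorm_tendsto_0_comp_bounded[OF _ _ L_tendsto[OF assms]])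
    show "bounded_near_0 UNIV (N 0) \<kappa>_eps" using kappa_eps_bounded by (simp add: B0)
  qed (use assms in \<open>auto simp: N_nonneg\<close>)
  show "N (m + 1) y \<le> Nk (m + 1) y" for y
    by (rule N_le_normk) auto
qed

lemma lameps_remainder_tendsto_0:
  assumes m: "m \<le> n" and IH: "\<And>j. j < m \<Longrightarrow> opnorm_tendsto_0 (B (j + 1)) (Nk (j + 1)) norm (\<kappa>_rem j)"
  shows "((\<lambda>eps. lam_rem m eps) \<longlongrightarrow> 0) (at_right 0)"
proof -
  have hB: "h \<in> B (m + 1)" using h_in B_antimono[of "m + 1" "n + 1"] m by auto
  have "((\<lambda>eps. \<kappa>_rem (m - j) eps (L j h)) \<longlongrightarrow> 0) (at_right 0)" if j: "j \<in> {1..m}" for j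
  proof (rule opnorm_tendsto_0_pointwise[OF IH])
    have "L j h \<in> B (m + 1 - j)"
      using L_bdd[of j "m + 1"] j m hB unfolding bounded_op_def by auto
    then show "L j h \<in> B (m - j + 1)" using j by (simp add: Suc_diff_le)
    then show "0 \<le> Nk (m - j + 1) (L j h)" using Nk_nonneg[of "m - j + 1"] m by auto
  qed (use j in auto)
  moreover have "((\<lambda>eps. \<kappa>_eps eps (tildeL sc L Leps m eps h)) \<longlongrightarrow> 0) (at_right 0)"
    using hB Nk_nonneg[of "m + 1"] m
    by (intro opnorm_tendsto_0_pointwise[OF kappa_eps_tildeL_tendsto_0]) auto
  ultimately have "((\<lambda>eps. (\<Sum>j=1..m. \<kappa>_rem (m - j) eps (L j h))
      + \<kappa>_eps eps (tildeL sc L Leps m eps h)) \<longlongrightarrow> 0) (at_right 0)"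
    by (intro tendsto_add_zero tendsto_null_sum) auto
  then show ?thesis
    by (rule Lim_transform_eventually) (use eventually_at_right_0_1 in \<open>auto elim!: eventually_mono simp: lameps_remainder\<close>)
qed

theorem kappa_rem_tendsto_0:
  "m \<le> n \<Longrightarrow> opnorm_tendsto_0 (B (m + 1)) (Nk (m + 1)) norm (\<kappa>_rem m)"
proof (induction m rule: less_induct)
  case (less m)
  let ?S = "B (m + 1)" and ?M = "Nk (m + 1)"
  have M: "\<forall>x\<in>?S. 0 \<le> ?M x" using Nk_nonneg less.prems by auto
  have IH: "opnorm_tendsto_0 (B (m - j + 1)) (Nk (m - j + 1)) norm (\<kappa>_rem (m - j))" if "j \<in> {1..m}" for j
    using less that by auto
  have R: "bounded_map ?S ?M (B i) (Nk i) R" if "i \<le> m + 1" for i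
    using that less.prems by (intro R_bounded_map) auto
  have LR: "bounded_map ?S ?M (B (m - j + 1)) (Nk (m - j + 1)) (\<lambda>x. L j (R x))" if "j \<in> {1..m}" for j
    using bounded_map_comp[OF R L_bounded_map[of j "m + 1"]] that less.prems by (auto simp: Suc_diff_le)
  have "opnorm_tendsto_0 ?S ?M norm (\<lambda>eps x.
      (\<Sum>j=1..m. lam_coeff j * \<kappa>_rem (m - j) eps (R x))
      + lam_rem m eps * \<kappa>_eps eps (R x)
      - ((\<Sum>j=1..m. \<kappa>_rem (m - j) eps (L j (R x))) + \<kappa>_eps eps (tildeL sc L Leps m eps (R x))))"
  proof (intro opnorm_tendsto_0_add opnorm_tendsto_0_diff opnorm_tendsto_0_sum opnorm_tendsto_0_cmult M)
    show "opnorm_tendsto_0 ?S ?M norm (\<lambda>eps x. \<kappa>_rem (m - j) eps (R x))" if "j \<in> {1..m}" for j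
      using that by (intro opnorm_tendsto_0_comp[OF M IH R]) auto
    show "opnorm_tendsto_0 ?S ?M norm (\<lambda>eps x. \<kappa>_rem (m - j) eps (L j (R x)))" if "j \<in> {1..m}" for j
      using that by (intro opnorm_tendsto_0_comp[OF M IH LR])
    show "opnorm_tendsto_0 ?S ?M norm (\<lambda>eps x.
        lam_rem m eps * \<kappa>_eps eps (R x))"
      using less
      by (intro opnorm_tendsto_0_mult_bounded M lameps_remainder_tendsto_0
          bounded_near_0_comp[OF kappa_eps_bounded R]) auto
    show "opnorm_tendsto_0 ?S ?M norm (\<lambda>eps x. \<kappa>_eps eps (tildeL sc L Leps m eps (R x)))"
      using less.prems by (intro opnorm_tendsto_0_comp[OF M kappa_eps_tildeL_tendsto_0 R]) auto
  qed
  then show ?case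
    by (rule opnorm_tendsto_0_cong)
      (rule eventually_mono[OF eventually_at_right_0_1], blast intro: kappa_rem_recursion[OF less.prems])
qed

lemma kappa_eps_bounded_B:
  assumes "1 \<le> p" "p \<le> n + 1"
  shows "bounded_near_0 (B p) (Nk p) \<kappa>_eps"
proof -
  have "\<kappa>_eps = (\<lambda>eps x. nu x + \<kappa>_rem 0 eps x)"
    by (simp add: tildekappa_def fun_eq_iff)
  moreover have "bounded_near_0 (B 1) (Nk 1) (\<lambda>eps x. nu x + \<kappa>_rem 0 eps x)"
    using kappa_rem_tendsto_0[of 0]
    by (intro bounded_near_0_add bounded_near_0_const nu_bounded_B1 bounded_near_0_if_opnorm_tendsto_0) simp
  ultimately show ?thesis
    using bounded_near_0_comp[OF _ incl_bounded_map[of 1 p]] assms by simp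
qed

end

section \<open>Expansion of \<open>\<nu>(\<epsilon>, \<cdot>)\<close>\<close>

locale normalized_spectral_perturbation =
  spectral_perturbation sc n B N L Leps lam h nu lameps nueps
  for sc :: "'k::real_normed_field \<Rightarrow> 'v::ab_group_add \<Rightarrow> 'v" and n B N L Leps lam h nu lameps nueps +
  fixes one :: 'v
  assumes one_in: "one \<in> B (n + 1)" and nu_one: "nu one = 1"
    and nueps_one: "\<And>eps. 0 < eps \<Longrightarrow> eps < 1 \<Longrightarrow> nueps eps one = 1"
    and nueps_h_bdd: "\<exists>C. \<forall>eps. 0 < eps \<and> eps < 1 \<longrightarrow> norm (nueps eps h) \<le> C"
begin

abbreviation "\<nu> \<equiv> nuk sc L h nu R one"
abbreviation "h_coeff \<equiv> recip_coeff (\<lambda>j. \<kappa> j one)"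

abbreviation "h_rem m eps \<equiv> expansion_remainder h_coeff (nueps eps h) m (of_real eps)"

lemma nu_coeff_eq: "\<nu> k f = (\<Sum>l=0..k. h_coeff l * \<kappa> (k - l) f)"
proof -
  have "\<nu> k f = \<kappa> k f + (\<Sum>i=1..k. h_coeff i * \<kappa> (k - i) f)"
    unfolding nuk_def
  proof (intro arg_cong2[where f = "(+)"] sum.cong refl)
    fix i assume "i \<in> {1..k}"
    then have "1 \<le> i" by simp
    then show "(\<Sum>l=1..i. \<Sum>js\<in>compositions i l. (-1) ^ l * prod_list (map (\<lambda>j. \<kappa> j one) js)) * \<kappa> (k - i) f
        = h_coeff i * \<kappa> (k - i) f"
      by (simp only: sum_compositions_eq_recip_coeff)
  qed
  also have "\<dots> = (\<Sum>l=0..k. h_coeff l * \<kappa> (k - l) f)"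
    by (simp add: sum.atLeast_Suc_atMost recip_coeff_0)
  finally show ?thesis .
qed

lemma kap_bounded_le:
  assumes "i \<le> k" "k \<le> n"
  shows "bounded_map (B k) (Nk k) UNIV norm (\<kappa> i)"
proof (cases "k = 0")
  case True
  with assms show ?thesis using kap_bounded[of 0] by simp
next
  case False
  show ?thesis
  proof (cases "i = 0")
    case True
    have "bounded_map (B k) (Nk k) UNIV norm nu"
      using False assms by (intro bounded_map_comp[OF incl_bounded_map nu_bounded_B1]) auto
    with True show ?thesis by (simp add: kap_0[abs_def])
  next
    case False
    with assms show ?thesis
      by (intro bounded_map_comp[OF incl_bounded_map kap_bounded]) auto
  qed
qed

theorem nu_coeff_bounded_functional: "k \<le> n \<Longrightarrow> bounded_functional sc (B k) (Nk k) (\<nu> k)"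
  unfolding nu_coeff_eq[abs_def]
  by (intro bounded_functionalI lin_on_sum lin_on_cmult bounded_map_sum bounded_map_cmult
      kap_bounded_le lin_on_subset[OF kap_lin B_antimono]) auto

lemma nueps_h_kappa_eps_one: "0 < eps \<Longrightarrow> eps < 1 \<Longrightarrow> \<kappa>_eps eps one * nueps eps h = 1"
  unfolding kappa_eps_def using nueps_one nueps_h by simp

lemma h_remainder_recursion:
  assumes eps: "0 < eps" "eps < 1"
  shows "h_rem m eps =
    - ((\<Sum>j=1..m. \<kappa> j one * h_rem (m - j) eps)
      + \<kappa>_rem m eps one * nueps eps h)"
proof -
  have e: "(of_real eps :: 'k) \<noteq> 0" using eps by simp
  have "(\<Sum>l=0..k. \<kappa> l one * h_coeff (k - l)) = (if k = 0 then 1 else 0)" for k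
    by (rule recip_coeff_convolution) (simp add: kap_0 nu_one)
  then have "0 = expansion_remainder (\<lambda>k. \<Sum>l=0..k. \<kappa> l one * h_coeff (k - l))
      (\<kappa>_eps eps one * nueps eps h) m (of_real eps)"
    by (simp only: nueps_h_kappa_eps_one[OF eps] expansion_remainder_const)
  also have "\<dots> = (\<Sum>l=0..m. \<kappa> l one * h_rem (m - l) eps)
      + \<kappa>_rem m eps one * nueps eps h"
    using expansion_remainder_mult[OF e, of "\<lambda>i. \<kappa> i one" h_coeff "\<kappa>_eps eps one" "nueps eps h" m]
    by (simp add: kappa_rem_eq)
  also have "\<dots> = h_rem m eps
      + ((\<Sum>j=1..m. \<kappa> j one * h_rem (m - j) eps)
      + \<kappa>_rem m eps one * nueps eps h)"
    by (simp add: sum.atLeast_Suc_atMost kap_0 nu_one)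
  finally show ?thesis
    unfolding eq_neg_iff_add_eq_0 by (rule sym)
qed

lemma h_remainder_tendsto_0:
  "m \<le> n \<Longrightarrow> ((\<lambda>eps. h_rem m eps) \<longlongrightarrow> 0) (at_right 0)"
proof (induction m rule: less_induct)
  case (less m)
  obtain C where "\<forall>eps. 0 < eps \<and> eps < 1 \<longrightarrow> norm (nueps eps h) \<le> C"
    using nueps_h_bdd by blast
  with eventually_at_right_0_1 have "Bfun (\<lambda>eps. nueps eps h) (at_right 0)"
    by (intro BfunI[where K = C]) (auto elim!: eventually_mono)
  moreover have "((\<lambda>eps. \<kappa>_rem m eps one) \<longlongrightarrow> 0) (at_right 0)"
    using one_in B_antimono[of "m + 1" "n + 1"] Nk_nonneg[of "m + 1"] less.prems
    by (intro opnorm_tendsto_0_pointwise[OF kappa_rem_tendsto_0]) auto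
  ultimately have "((\<lambda>eps. nueps eps h * \<kappa>_rem m eps one) \<longlongrightarrow> 0) (at_right 0)"
    by (rule Bfun_mult_tendsto_0)
  moreover have "((\<lambda>eps. \<Sum>j=1..m. \<kappa> j one * h_rem (m - j) eps)
      \<longlongrightarrow> 0) (at_right 0)"
    using less by (intro tendsto_null_sum tendsto_mult_right_zero) auto
  ultimately have "((\<lambda>eps. - ((\<Sum>j=1..m. \<kappa> j one * h_rem (m - j) eps)
      + \<kappa>_rem m eps one * nueps eps h)) \<longlongrightarrow> - 0) (at_right 0)"
    by (intro tendsto_minus tendsto_add_zero) (simp_all add: mult.commute)
  then show ?case
    unfolding minus_zero by (rule Lim_transform_eventually)
      (rule eventually_mono[OF eventually_at_right_0_1], rule h_remainder_recursion[symmetric], auto)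
qed

lemma tildenu_eq:
  assumes eps: "0 < eps" "eps < 1"
  shows "tildenu sc L h nu R one nueps m eps f =
    (\<Sum>l=0..m. h_coeff l * \<kappa>_rem (m - l) eps f)
    + h_rem m eps * \<kappa>_eps eps f"
proof -
  have e: "(of_real eps :: 'k) \<noteq> 0" using eps by simp
  have "nueps eps f = nueps eps h * \<kappa>_eps eps f"
    using nueps_h[OF eps] unfolding kappa_eps_def by simp
  then have "tildenu sc L h nu R one nueps m eps f = expansion_remainder
      (\<lambda>k. \<Sum>l=0..k. h_coeff l * \<kappa> (k - l) f) (nueps eps h * \<kappa>_eps eps f) m (of_real eps)"
    unfolding tildenu_def expansion_remainder_def nu_coeff_eq by simp
  then show ?thesis
    using expansion_remainder_mult[OF e, of h_coeff "\<lambda>i. \<kappa> i f" "nueps eps h" "\<kappa>_eps eps f" m]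
    by (simp add: kappa_rem_eq)
qed

theorem tildenu_tendsto_0:
  assumes m: "m \<le> n"
  shows "opnorm_tendsto_0 (B (m + 1)) (Nk (m + 1)) norm (tildenu sc L h nu R one nueps m)"
proof -
  let ?S = "B (m + 1)" and ?M = "Nk (m + 1)"
  have M: "\<forall>x\<in>?S. 0 \<le> ?M x" using Nk_nonneg m by auto
  have "opnorm_tendsto_0 ?S ?M norm (\<lambda>eps f. (\<Sum>l=0..m. h_coeff l * \<kappa>_rem (m - l) eps f)
      + h_rem m eps * \<kappa>_eps eps f)"
  proof (intro opnorm_tendsto_0_add opnorm_tendsto_0_sum opnorm_tendsto_0_cmult M)
    show "opnorm_tendsto_0 ?S ?M norm (\<kappa>_rem (m - l))" if "l \<in> {0..m}" for l
      using opnorm_tendsto_0_comp[OF M kappa_rem_tendsto_0[of "m - l"] incl_bounded_map[of "m - l + 1" "m + 1"]]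
        that m by simp
    show "opnorm_tendsto_0 ?S ?M norm
        (\<lambda>eps f. h_rem m eps * \<kappa>_eps eps f)"
      using m by (intro opnorm_tendsto_0_mult_bounded M h_remainder_tendsto_0 kappa_eps_bounded_B) auto
  qed
  then show ?thesis
    by (rule opnorm_tendsto_0_cong) (use eventually_at_right_0_1 in \<open>auto elim!: eventually_mono simp: tildenu_eq\<close>)
qed

end

theorem mainTheorem4:
  fixes sc :: "'k::{real_normed_field,banach} \<Rightarrow> 'v::ab_group_add \<Rightarrow> 'v"
    and n :: nat
    and B :: "nat \<Rightarrow> 'v set" and N :: "nat \<Rightarrow> 'v \<Rightarrow> real"
    and L :: "nat \<Rightarrow> 'v \<Rightarrow> 'v" and Leps :: "real \<Rightarrow> 'v \<Rightarrow> 'v"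
    and lam :: 'k and h :: 'v and nu :: "'v \<Rightarrow> 'k" and D0 :: "'v set"
    and lameps :: "real \<Rightarrow> 'k" and nueps :: "real \<Rightarrow> 'v \<Rightarrow> 'k"
  assumes vs: "vector_space sc"
    and B0: "B 0 = UNIV"
    and Bsub: "\<And>k. k \<le> n + 1 \<Longrightarrow> module.subspace sc (B k)"
    and Bdec: "\<And>k. k \<le> n \<Longrightarrow> B (Suc k) \<subseteq> B k"
    \<comment> \<open>(I)\<close>
    and condI: "\<And>j i. j \<le> n \<Longrightarrow> j \<le> i \<Longrightarrow> i \<le> n \<Longrightarrow>
                  lin_on sc sc (B i) (L j) \<and> L j ` B i \<subseteq> B (i - j)"
    and Leps_lin: "\<And>eps. 0 < eps \<Longrightarrow> eps < 1 \<Longrightarrow> lin_on sc sc UNIV (Leps eps)"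
    \<comment> \<open>(II)\<close>
    and lam_ne: "lam \<noteq> 0" and h_in: "h \<in> B (n + 1)"
    and nu_lin: "lin_on sc (*) UNIV nu"
    and nu_eig: "\<And>f. nu (L 0 f) = lam * nu f"
    and h_eig: "L 0 h = sc lam h" and nu_h: "nu h = 1"
    and D0_sub: "module.subspace sc D0" and B1_D0: "B 1 \<subseteq> D0"
    and R_inv: "\<And>f. f \<in> D0 \<Longrightarrow> \<exists>!g. Rop sc (L 0) lam h nu g - sc lam g = f"
    and Rl_pres: "\<And>i. 1 \<le> i \<Longrightarrow> i \<le> n + 1 \<Longrightarrow> Rlam sc (L 0) lam h nu ` B i \<subseteq> B i"
    \<comment> \<open>(III)\<close>
    and nueps_lin: "\<And>eps. 0 < eps \<Longrightarrow> eps < 1 \<Longrightarrow> lin_on sc (*) UNIV (nueps eps)"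
    and nueps_eig: "\<And>eps f. 0 < eps \<Longrightarrow> eps < 1 \<Longrightarrow>
                      nueps eps (Leps eps f) = lameps eps * nueps eps f"
    and nueps_h: "\<And>eps. 0 < eps \<Longrightarrow> eps < 1 \<Longrightarrow> nueps eps h \<noteq> 0"
    \<comment> \<open>(a)\<close>
    and banach: "\<And>k. k \<le> n + 1 \<Longrightarrow> banach_on sc (B k) (N k)"
    \<comment> \<open>(b)\<close>
    and nu_bdd: "bounded_functional sc (B 0) (N 0) nu"
    and L_bdd: "\<And>j i. j \<le> n \<Longrightarrow> j \<le> i \<Longrightarrow> i \<le> n + 1 \<Longrightarrow>
                  bounded_op sc sc (B i) (N i) (B (i - j)) (N (i - j)) (L j)"
    and kappa_bdd: "\<exists>C. \<forall>eps. 0 < eps \<and> eps < 1 \<longrightarrow> opnorm_le (B 0) (N 0) norm (kappa_eps nueps h eps) C"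
    and Rl_bdd1: "bounded_op sc sc (B 1) (N 1) (B 0) (N 0) (Rlam sc (L 0) lam h nu)"
    and Rl_bdd: "\<And>j. 1 \<le> j \<Longrightarrow> j \<le> n + 1 \<Longrightarrow> bounded_op sc sc (B j) (N j) (B j) (N j) (Rlam sc (L 0) lam h nu)"
    \<comment> \<open>(c)\<close>
    and Lconv: "\<And>j. j \<le> n \<Longrightarrow> opnorm_tendsto_0 (B (j + 1)) (N (j + 1)) (N 0) (tildeL sc L Leps j)"
  shows "(\<forall>k\<le>n. bounded_functional sc (B k) (normk N k) (kap sc L h nu (Rlam sc (L 0) lam h nu) k)) \<and>
         (\<forall>k\<le>n. opnorm_tendsto_0 (B (k + 1)) (normk N (k + 1)) norm (tildekappa sc L h nu (Rlam sc (L 0) lam h nu) nueps k)) \<and>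
         (\<forall>one. one \<in> B (n + 1) \<and> nu one = 1 \<and> (\<forall>eps. 0 < eps \<and> eps < 1 \<longrightarrow> nueps eps one = 1) \<and>
            (\<exists>C. \<forall>eps. 0 < eps \<and> eps < 1 \<longrightarrow> norm (nueps eps h) \<le> C) \<longrightarrow>
            (\<forall>k\<le>n. bounded_functional sc (B k) (normk N k) (nuk sc L h nu (Rlam sc (L 0) lam h nu) one k)) \<and>
            (\<forall>k\<le>n. opnorm_tendsto_0 (B (k + 1)) (normk N (k + 1)) norm
                (tildenu sc L h nu (Rlam sc (L 0) lam h nu) one nueps k)))"
proof -
  have nonneg: "0 \<le> N k x" if "k \<le> n + 1" "x \<in> B k" for k x
    using banach[OF that(1)] that(2) unfolding banach_on_def by (elim conjE) (rule bspec)
  have resolvent: "\<And>f. f \<in> B 1 \<Longrightarrow> \<exists>!g. Rop sc (L 0) lam h nu g - sc lam g = f"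
    using R_inv B1_D0 by blast
  have P: "spectral_perturbation sc n B N L Leps lam h nu lameps nueps"
    by (rule spectral_perturbation.intro)
      (fact vs B0 Bsub Bdec nonneg h_in nu_lin nu_eig h_eig nu_h resolvent nueps_lin nueps_eig nueps_h
        nu_bdd L_bdd kappa_bdd Rl_bdd1 Rl_bdd Lconv)+
  interpret spectral_perturbation sc n B N L Leps lam h nu lameps nueps by (rule P)
  have normalized:
    "(\<forall>k\<le>n. bounded_functional sc (B k) (normk N k) (nuk sc L h nu R one k)) \<and>
     (\<forall>k\<le>n. opnorm_tendsto_0 (B (k + 1)) (normk N (k + 1)) norm (tildenu sc L h nu R one nueps k))"
    if "one \<in> B (n + 1) \<and> nu one = 1 \<and> (\<forall>eps. 0 < eps \<and> eps < 1 \<longrightarrow> nueps eps one = 1) \<and>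
      (\<exists>C. \<forall>eps. 0 < eps \<and> eps < 1 \<longrightarrow> norm (nueps eps h) \<le> C)" for one
  proof -
    interpret normalized_spectral_perturbation sc n B N L Leps lam h nu lameps nueps one
      by (rule normalized_spectral_perturbation.intro[OF P], rule normalized_spectral_perturbation_axioms.intro)
        (use that in auto)
    show ?thesis using nu_coeff_bounded_functional tildenu_tendsto_0 by blast
  qed
  show ?thesis using kap_bounded_functional kappa_rem_tendsto_0 normalized by blast
qed

end
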